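(* Let $d\ge2$, $\mathcal D=\{1,\dots,d\}$, $d_s\in\{1,\dots,d-1\}$, $\beta\ge0$, $\alpha>-\beta$, $\boldsymbol\Gamma=(\Gamma_1,\dots,\Gamma_d)\in(0,1]^d$ nonincreasing, $\boldsymbol\gamma=(\gamma_1,\dots,\gamma_d)\in(0,1]^d$, and $f\in\mathcal A^{w^{\alpha,\beta}}(\mathbb T^d)$. Then $$\frac{\|f-\mathrm T_{d_s}f\|_{\mathrm L_\infty(\mathbb T^d)}}{\|f\|_{\mathcal A^{w^{\alpha,\beta}}(\mathbb T^d)}}\le\Gamma_{d_s+1}\,(2+d_s)^{-\alpha}\,2^{-\beta(d_s+1)}\prod_{s=1}^{d_s+1}\gamma^*_s,$$ where $(\gamma^*_s)_{s=1}^d$ is the nonincreasing rearrangement of $\boldsymbol\gamma$.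
   Context: $\mathbb T=[0,1)$ with periodic identification; $c_{\mathbf k}(g)$ are Fourier coefficients. For $\mathbf k\in\mathbb Z^d$, $\operatorname{supp}\mathbf k=\{i:k_i\neq0\}$ and $w^{\alpha,\beta}(\mathbf k)=\gamma_{\operatorname{supp}\mathbf k}^{-1}(1+\|\mathbf k\|_1)^\alpha\prod_{s\in\operatorname{supp}\mathbf k}(1+|k_s|)^\beta$ with POD weights $\gamma_{\mathbf u}=\Gamma_{|\mathbf u|}\prod_{s\in\mathbf u}\gamma_s$ for $\mathbf u\subseteq\mathcal D$ (here $\Gamma_0\in(0,1]$ is arbitrary). $\mathcal A^{w}(\mathbb T^d)=\{g\in\mathrm L_1:\|g\|_{\mathcal A^w}=\sum_{\mathbf k}w(\mathbf k)|c_{\mathbf k}(g)|<\infty\}$. For $\mathbf u\subseteq\mathcal D$: $\mathrm P_{\mathbf u}f(\mathbf x_{\mathbf u})=\int_{\mathbb T^{|\mathcal D\setminus\mathbf u|}}f(\mathbf x)\,d\mathbf x_{\mathcal D\setminus\mathbf u}$, ANOVA terms $f_{\mathbf u}=\mathrm P_{\mathbf u}f-\sum_{\mathbf v\subsetneq\mathbf u}f_{\mathbf v}$ (recursively), and $\mathrm T_{d_s}f=\sum_{|\mathbf u|\le d_s}f_{\mathbf u}$. *)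

theory Defs
  imports "HOL-Probability.Probability"
begin

definition torus :: "nat set \<Rightarrow> (nat \<Rightarrow> real) measure" where
  "torus D = PiM D (\<lambda>_. restrict_space lborel {0..<1})"

definition freqs :: "nat set \<Rightarrow> (nat \<Rightarrow> int) set" where
  "freqs D = {k. \<forall>i. i \<notin> D \<longrightarrow> k i = 0}"

definition fourier_coeff :: "nat set \<Rightarrow> ((nat \<Rightarrow> real) \<Rightarrow> complex) \<Rightarrow> (nat \<Rightarrow> int) \<Rightarrow> complex" where
  "fourier_coeff D g k =
     (\<integral>x. g x * exp (- 2 * pi * \<i> * complex_of_real (\<Sum>i\<in>D. real_of_int (k i) * x i)) \<partial>torus D)"

definition supp :: "(nat \<Rightarrow> int) \<Rightarrow> nat set" where
  "supp k = {i. k i \<noteq> 0}"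

definition pod_weight :: "(nat \<Rightarrow> real) \<Rightarrow> (nat \<Rightarrow> real) \<Rightarrow> nat set \<Rightarrow> real" where
  "pod_weight \<Gamma> \<gamma> u = \<Gamma> (card u) * (\<Prod>s\<in>u. \<gamma> s)"

definition norm1 :: "nat set \<Rightarrow> (nat \<Rightarrow> int) \<Rightarrow> real" where
  "norm1 D k = (\<Sum>i\<in>D. real_of_int \<bar>k i\<bar>)"

definition wab :: "nat set \<Rightarrow> real \<Rightarrow> real \<Rightarrow> (nat \<Rightarrow> real) \<Rightarrow> (nat \<Rightarrow> real) \<Rightarrow> (nat \<Rightarrow> int) \<Rightarrow> real" where
  "wab D \<alpha> \<beta> \<Gamma> \<gamma> k = inverse (pod_weight \<Gamma> \<gamma> (supp k)) * (1 + norm1 D k) powr \<alpha>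
      * (\<Prod>s\<in>supp k. (1 + real_of_int \<bar>k s\<bar>) powr \<beta>)"

definition in_wiener :: "nat set \<Rightarrow> ((nat \<Rightarrow> int) \<Rightarrow> real) \<Rightarrow> ((nat \<Rightarrow> real) \<Rightarrow> complex) \<Rightarrow> bool" where
  "in_wiener D w g \<longleftrightarrow> integrable (torus D) g \<and>
      (\<lambda>k. w k * norm (fourier_coeff D g k)) summable_on freqs D"

definition wiener_norm :: "nat set \<Rightarrow> ((nat \<Rightarrow> int) \<Rightarrow> real) \<Rightarrow> ((nat \<Rightarrow> real) \<Rightarrow> complex) \<Rightarrow> real" where
  "wiener_norm D w g = (\<Sum>\<^sub>\<infinity>k\<in>freqs D. w k * norm (fourier_coeff D g k))"

definition proj :: "nat set \<Rightarrow> nat set \<Rightarrow> ((nat \<Rightarrow> real) \<Rightarrow> complex) \<Rightarrow> (nat \<Rightarrow> real) \<Rightarrow> complex" where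
  "proj D u g x = (\<integral>y. g (\<lambda>i. if i \<in> u then x i else y i) \<partial>torus (D - u))"

function anova :: "nat set \<Rightarrow> ((nat \<Rightarrow> real) \<Rightarrow> complex) \<Rightarrow> nat set \<Rightarrow> (nat \<Rightarrow> real) \<Rightarrow> complex" where
  "anova D g u = (if finite u then (\<lambda>x. proj D u g x - (\<Sum>v\<in>Pow u - {u}. anova D g v x))
                  else (\<lambda>x. 0))"
  by pat_completeness auto
termination
  by (relation "Wellfounded.measure (\<lambda>(D, g, u). card u)")
     (auto intro: psubset_card_mono)

definition truncation :: "nat set \<Rightarrow> nat \<Rightarrow> ((nat \<Rightarrow> real) \<Rightarrow> complex) \<Rightarrow> (nat \<Rightarrow> real) \<Rightarrow> complex" where
  "truncation D ds g x = (\<Sum>u\<in>{u. u \<subseteq> D \<and> card u \<le> ds}. anova D g u x)"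

definition Linf_norm :: "nat set \<Rightarrow> ((nat \<Rightarrow> real) \<Rightarrow> complex) \<Rightarrow> ereal" where
  "Linf_norm D g = esssup (torus D) (\<lambda>x. ereal (norm (g x)))"

text \<open>Nonincreasing rearrangement of (gamma_1,...,gamma_d), indexed from 1.\<close>
definition gamma_star :: "nat \<Rightarrow> (nat \<Rightarrow> real) \<Rightarrow> nat \<Rightarrow> real" where
  "gamma_star d \<gamma> s = rev (sort (map \<gamma> [1..<d+1])) ! (s - 1)"

end

theory Submission
  imports Defs "HOL-Complex_Analysis.Cauchy_Integral_Theorem" "HOL-Library.Function_Algebras"
    "HOL-Library.Multiset"
begin

text \<open>Since the weight is at least 1, the Fourier coefficients \<open>c\<^sub>k\<close> of \<open>f\<close> are absolutely summable,
  so \<open>f\<close> agrees almost everywhere with its Fourier series: an integrable function whose Fourier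
  coefficients all vanish is zero, because (Stone--Weierstrass on the product of circles) it integrates
  to zero against every continuous function of \<open>exp (2\<pi>ix)\<close>, hence over every Borel set.
  On an absolutely convergent Fourier series the ANOVA term \<open>f\<^sub>u\<close> is the subseries over the
  frequencies with support exactly \<open>u\<close>, so the remainder \<open>f - T f\<close> is the subseries over the
  frequencies with more than \<open>d\<^sub>s\<close> nonzero entries. For such \<open>k\<close> the unnormalised weight
  \<open>(1 + |k|\<^sub>1)^\<alpha> \<Prod>(1 + |k\<^sub>s|)^\<beta>\<close> is at least its value at a frequency with
  \<open>d\<^sub>s + 1\<close> entries \<open>\<plusminus>1\<close>, namely \<open>(2 + d\<^sub>s)^\<alpha> 2^(\<beta>(d\<^sub>s + 1))\<close>, while the POD weight of
  \<open>supp k\<close> is at most \<open>\<Gamma>\<^bsub>d\<^sub>s+1\<^esub>\<close> times the product of the \<open>d\<^sub>s + 1\<close> largest \<open>\<gamma>\<^sub>s\<close>.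
  So \<open>|c\<^sub>k| \<le> B w(k) |c\<^sub>k|\<close> for every term of the remainder, with \<open>B\<close> the claimed constant.\<close>

lemma integrable_mult_bounded:
  fixes f g :: "'a \<Rightarrow> complex"
  assumes "integrable M f" "g \<in> borel_measurable M" "\<And>x. x \<in> space M \<Longrightarrow> norm (g x) \<le> B"
  shows "integrable M (\<lambda>x. f x * g x)"
proof (rule Bochner_Integration.integrable_bound[where f="\<lambda>x. B * norm (f x)"])
  show "integrable M (\<lambda>x. B * norm (f x))"
    using assms(1) by simp
  show "(\<lambda>x. f x * g x) \<in> borel_measurable M"
    using borel_measurable_integrable[OF assms(1)] assms(2) by measurable
  show "AE x in M. norm (f x * g x) \<le> norm (B * norm (f x))"
  proof (rule AE_I2)
    fix x assume "x \<in> space M"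
    then have "norm (f x) * norm (g x) \<le> norm (f x) * B"
      using assms(3) by (simp add: mult_left_mono)
    also have "\<dots> \<le> norm (B * norm (f x))"
      by (simp add: abs_mult mult.commute mult_right_mono)
    finally show "norm (f x * g x) \<le> norm (B * norm (f x))"
      by (simp add: norm_mult)
  qed
qed

lemma (in sigma_finite_measure) AE_zero_if_set_integrals_zero_on_generator:
  fixes h :: "'a \<Rightarrow> 'b::{banach, second_countable_topology}"
  assumes h: "integrable M h"
    and G: "Int_stable G" "G \<subseteq> sets M" "sets M \<subseteq> sigma_sets (space M) G"
    and total: "(\<integral>x. h x \<partial>M) = 0"
    and on_G: "\<And>A. A \<in> G \<Longrightarrow> (\<integral>x. indicator A x *\<^sub>R h x \<partial>M) = 0"
  shows "AE x in M. h x = 0"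
proof (rule density_zero[OF h])
  have "sigma_sets (space M) G \<subseteq> sets M"
    using G(2) by (rule sets.sigma_sets_subset)
  fix A assume "A \<in> sets M"
  then have A: "A \<in> sigma_sets (space M) G"
    using G(3) by blast
  have "G \<subseteq> Pow (space M)"
    using G(2) sets.sets_into_space by blast
  from G(1) this A have "(\<integral>x. indicator A x *\<^sub>R h x \<partial>M) = 0"
  proof (induction rule: sigma_sets_induct_disjoint)
    case (basic A)
    then show ?case by (rule on_G)
  next
    case empty
    then show ?case by simp
  next
    case (compl A)
    then have "A \<in> sets M"
      using \<open>sigma_sets (space M) G \<subseteq> sets M\<close> by blast
    have "(\<integral>x. indicator (space M - A) x *\<^sub>R h x \<partial>M) = (\<integral>x. h x - indicator A x *\<^sub>R h x \<partial>M)"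
      by (rule Bochner_Integration.integral_cong) (auto simp: indicator_def)
    also have "\<dots> = 0"
      using compl.IH total integrable_mult_indicator[OF \<open>A \<in> sets M\<close> h] h by simp
    finally show ?case .
  next
    case (union A)
    then have A: "range A \<subseteq> sets M"
      using \<open>sigma_sets (space M) G \<subseteq> sets M\<close> by blast
    have "(LINT x:(\<Union>i. A i)|M. h x) = (\<Sum>i. (LINT x:(A i)|M. h x))"
      using A union.hyps(1) integrable_mult_indicator[of "\<Union>i. A i", OF _ h]
      by (intro lebesgue_integral_countable_add)
         (auto simp: disjoint_family_on_def set_integrable_def)
    then show ?case
      using union.IH by (simp add: set_lebesgue_integral_def)
  qed
  then show "set_lebesgue_integral M A h = 0"
    by (simp add: set_lebesgue_integral_def)
qed

lemma tendsto_indicator_closed: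
  fixes C :: "'a::metric_space set"
  assumes C: "closed C" "C \<noteq> {}"
  shows "(\<lambda>n. max 0 (1 - real n * infdist z C)) \<longlonglongrightarrow> indicator C z"
proof (cases "z \<in> C")
  case True
  then show ?thesis by simp
next
  case False
  then have "infdist z C > 0"
    using infdist_pos_not_in_closed[OF C] by blast
  then have "eventually (\<lambda>n. 1 < real n * infdist z C) sequentially"
    using filterlim_tendsto_pos_mult_at_top[OF tendsto_const \<open>infdist z C > 0\<close> filterlim_real_sequentially]
    by (simp add: filterlim_at_top_dense mult.commute)
  then have "eventually (\<lambda>n. max 0 (1 - real n * infdist z C) = 0) sequentially"
    by eventually_elim simp
  then show ?thesis
    using False by (simp add: tendsto_eventually)
qed

lemma integrable_count_space_if_norm_summable:
  fixes c :: "'i \<Rightarrow> 'b::{banach, second_countable_topology}"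
  assumes "(\<lambda>k. norm (c k)) summable_on K"
  shows "integrable (count_space K) c"
  using assms abs_summable_equivalent[of c K] unfolding Infinite_Set_Sum.abs_summable_on_def by simp

lemma integral_count_space_eq_infsum:
  fixes g :: "'i \<Rightarrow> 'b::{banach, second_countable_topology}"
  assumes "integrable (count_space K) g"
  shows "(\<integral>k. g k \<partial>count_space K) = (\<Sum>\<^sub>\<infinity>k\<in>K. g k)"
  using infsetsum_infsum[of g K] assms unfolding Infinite_Set_Sum.abs_summable_on_def infsetsum_def
  by simp

lemma integrable_count_space_if_norm_le:
  fixes g :: "'i \<Rightarrow> 'b::{banach, second_countable_topology}"
    and c :: "'i \<Rightarrow> 'c::{banach, second_countable_topology}"
  assumes "integrable (count_space K) c" "\<And>k. k \<in> K \<Longrightarrow> norm (g k) \<le> B * norm (c k)"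
  shows "integrable (count_space K) g"
proof (rule Bochner_Integration.integrable_bound[where f="\<lambda>k. B * norm (c k)"])
  show "AE k in count_space K. norm (g k) \<le> norm (B * norm (c k))"
    using assms(2) by (intro AE_I2) (auto intro: order.trans[OF _ abs_ge_self])
qed (use assms(1) in simp_all)

context finite_measure
begin

lemma integrable_count_space_pair_bounded:
  fixes c :: "'i \<Rightarrow> complex" and \<phi> :: "'i \<Rightarrow> 'a \<Rightarrow> complex"
  assumes K: "countable K" and c: "integrable (count_space K) c"
    and \<phi>_measurable: "\<And>k. k \<in> K \<Longrightarrow> \<phi> k \<in> borel_measurable M"
    and \<phi>_integrable: "\<And>k. k \<in> K \<Longrightarrow> integrable M (\<phi> k)"
    and \<phi>_bounded: "\<And>k x. k \<in> K \<Longrightarrow> x \<in> space M \<Longrightarrow> norm (\<phi> k x) \<le> 1"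
  shows "integrable (count_space K \<Otimes>\<^sub>M M) (\<lambda>(k, x). c k * \<phi> k x)"
proof -
  interpret pair_sigma_finite "count_space K" M
    by (simp add: pair_sigma_finite_def sigma_finite_measure_count_space_countable[OF K]
        sigma_finite_measure_axioms)
  show ?thesis
  proof (rule Fubini_integrable, unfold case_prod_conv)
    have "(\<lambda>p. c (fst p) * \<phi> (fst p) (snd p)) \<in> borel_measurable (count_space K \<Otimes>\<^sub>M M)"
    proof (rule measurable_compose_countable'[where g=fst and I=K and f="\<lambda>k p. c k * \<phi> k (snd p)"])
      fix k assume "k \<in> K"
      have "(\<lambda>p. \<phi> k (snd p)) \<in> borel_measurable (count_space K \<Otimes>\<^sub>M M)"
        by (rule measurable_compose[OF measurable_snd \<phi>_measurable[OF \<open>k \<in> K\<close>]])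
      then show "(\<lambda>p. c k * \<phi> k (snd p)) \<in> borel_measurable (count_space K \<Otimes>\<^sub>M M)"
        by simp
    qed (auto simp: K)
    then show "(\<lambda>(k, x). c k * \<phi> k x) \<in> borel_measurable (count_space K \<Otimes>\<^sub>M M)"
      by (simp add: case_prod_beta')
    show "integrable (count_space K) (\<lambda>k. \<integral>x. norm (c k * \<phi> k x) \<partial>M)"
    proof (rule integrable_count_space_if_norm_le[OF c, where B="measure M (space M)"])
      fix k assume k: "k \<in> K"
      have "(\<integral>x. norm (c k * \<phi> k x) \<partial>M) \<le> (\<integral>x. norm (c k) \<partial>M)"
        using \<phi>_integrable[OF k] \<phi>_bounded[OF k]
        by (intro integral_mono) (auto simp: norm_mult mult_left_le)
      then show "norm (\<integral>x. norm (c k * \<phi> k x) \<partial>M) \<le> measure M (space M) * norm (c k)"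
        by (simp add: mult.commute)
    qed
    show "AE k in count_space K. integrable M (\<lambda>x. c k * \<phi> k x)"
      using \<phi>_integrable by (intro AE_I2) simp
  qed
qed

lemma
  fixes c :: "'i \<Rightarrow> complex" and \<phi> :: "'i \<Rightarrow> 'a \<Rightarrow> complex"
  assumes K: "countable K" and c: "(\<lambda>k. norm (c k)) summable_on K"
    and \<phi>_measurable: "\<And>k. k \<in> K \<Longrightarrow> \<phi> k \<in> borel_measurable M"
    and \<phi>_bounded: "\<And>k x. k \<in> K \<Longrightarrow> x \<in> space M \<Longrightarrow> norm (\<phi> k x) \<le> 1"
  shows integrable_infsum_bounded: "integrable M (\<lambda>x. \<Sum>\<^sub>\<infinity>k\<in>K. c k * \<phi> k x)"
    and integral_infsum_bounded:
      "(\<integral>x. (\<Sum>\<^sub>\<infinity>k\<in>K. c k * \<phi> k x) \<partial>M) = (\<Sum>\<^sub>\<infinity>k\<in>K. c k * (\<integral>x. \<phi> k x \<partial>M))"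
proof -
  interpret pair_sigma_finite "count_space K" M
    by (simp add: pair_sigma_finite_def sigma_finite_measure_count_space_countable[OF K]
        sigma_finite_measure_axioms)
  have c_integrable: "integrable (count_space K) c"
    by (rule integrable_count_space_if_norm_summable[OF c])
  have \<phi>_integrable: "integrable M (\<phi> k)" if "k \<in> K" for k
    by (rule integrable_const_bound[where B=1]) (use \<phi>_bounded that \<phi>_measurable in auto)
  note F_integrable = integrable_count_space_pair_bounded[OF K c_integrable \<phi>_measurable \<phi>_integrable \<phi>_bounded]
  have series: "(\<integral>k. c k * \<phi> k x \<partial>count_space K) = (\<Sum>\<^sub>\<infinity>k\<in>K. c k * \<phi> k x)" if "x \<in> space M" for x
    using \<phi>_bounded that
    by (intro integral_count_space_eq_infsum integrable_count_space_if_norm_le[OF c_integrable, where B=1])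
       (auto simp: norm_mult mult_left_le)
  have "integrable M (\<lambda>x. \<integral>k. c k * \<phi> k x \<partial>count_space K)"
    using integrable_snd[OF F_integrable] by simp
  then show "integrable M (\<lambda>x. \<Sum>\<^sub>\<infinity>k\<in>K. c k * \<phi> k x)"
    by (rule Bochner_Integration.integrable_cong[THEN iffD1, rotated 2]) (auto simp: series)
  have "(\<integral>x. (\<Sum>\<^sub>\<infinity>k\<in>K. c k * \<phi> k x) \<partial>M) = (\<integral>x. (\<integral>k. c k * \<phi> k x \<partial>count_space K) \<partial>M)"
    by (rule Bochner_Integration.integral_cong) (auto simp: series)
  also have "\<dots> = (\<integral>k. c k * (\<integral>x. \<phi> k x \<partial>M) \<partial>count_space K)"
    using Fubini_integral[OF F_integrable] by simp
  also have "\<dots> = (\<Sum>\<^sub>\<infinity>k\<in>K. c k * (\<integral>x. \<phi> k x \<partial>M))"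
  proof (intro integral_count_space_eq_infsum
      integrable_count_space_if_norm_le[OF c_integrable, where B="measure M (space M)"])
    fix k assume "k \<in> K"
    have "norm (\<integral>x. \<phi> k x \<partial>M) \<le> (\<integral>x. norm (\<phi> k x) \<partial>M)"
      by (rule integral_norm_bound)
    also have "\<dots> \<le> (\<integral>x. 1 \<partial>M)"
      using \<phi>_integrable[OF \<open>k \<in> K\<close>] \<phi>_bounded[OF \<open>k \<in> K\<close>] by (intro integral_mono) auto
    finally have "norm (\<integral>x. \<phi> k x \<partial>M) \<le> measure M (space M)"
      by simp
    then show "norm (c k * (\<integral>x. \<phi> k x \<partial>M)) \<le> measure M (space M) * norm (c k)"
      by (simp add: norm_mult mult.commute mult_left_mono)
  qed
  finally show "(\<integral>x. (\<Sum>\<^sub>\<infinity>k\<in>K. c k * \<phi> k x) \<partial>M) = (\<Sum>\<^sub>\<infinity>k\<in>K. c k * (\<integral>x. \<phi> k x \<partial>M))" .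
qed

end

section \<open>The torus and its characters\<close>

abbreviation unit_interval :: "real measure" where
  "unit_interval \<equiv> restrict_space lborel {0..<1}"

lemma prob_space_unit_interval: "prob_space unit_interval"
  by (rule prob_spaceI) (simp add: emeasure_restrict_space space_restrict_space)

interpretation unit_interval: prob_space unit_interval
  by (rule prob_space_unit_interval)

interpretation unit_product: product_prob_space "\<lambda>_::nat. unit_interval" UNIV
  by unfold_locales

lemma prob_space_torus: "prob_space (torus D)"
  unfolding torus_def by (rule prob_space_PiM) (rule prob_space_unit_interval)

interpretation torus: prob_space "torus D" for D
  by (rule prob_space_torus)

lemma space_torus: "space (torus D) = PiE D (\<lambda>_. {0..<1})"
  unfolding torus_def by (simp add: space_PiM space_restrict_space)

lemma measurable_torus_coordinate [measurable]:
  assumes "i \<in> D"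
  shows "(\<lambda>x. x i) \<in> borel_measurable (torus D)"
proof -
  have "(\<lambda>x. x i) \<in> measurable (torus D) unit_interval"
    unfolding torus_def by (rule measurable_component_singleton[OF assms])
  moreover have "(\<lambda>t. t) \<in> borel_measurable unit_interval"
    by (rule measurable_restrict_space1) measurable
  ultimately show ?thesis
    by (rule measurable_compose)
qed

definition character :: "nat set \<Rightarrow> (nat \<Rightarrow> int) \<Rightarrow> (nat \<Rightarrow> real) \<Rightarrow> complex" where
  "character D k x = exp (2 * pi * \<i> * complex_of_real (\<Sum>i\<in>D. real_of_int (k i) * x i))"

lemma fourier_coeff_eq_integral_character:
  "fourier_coeff D g k = (\<integral>x. g x * character D (- k) x \<partial>torus D)"
  unfolding fourier_coeff_def character_def by (simp add: sum_negf)

lemma norm_exp_2pi_i [simp]: "norm (exp (2 * pi * \<i> * complex_of_real t)) = 1"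
  using norm_exp_i_times[of "2 * pi * t"] by (simp add: mult_ac)

lemma norm_character [simp]: "norm (character D k x) = 1"
  unfolding character_def by simp

lemma character_mult: "character D k x * character D l x = character D (k + l) x"
  unfolding character_def by (simp add: exp_add[symmetric] sum.distrib distrib_left distrib_right)

lemma character_zero [simp]: "character D 0 x = 1"
  unfolding character_def by simp

lemma cnj_character: "cnj (character D k x) = character D (- k) x"
  unfolding character_def by (simp add: exp_cnj sum_negf)

lemma character_eq_prod:
  "finite D \<Longrightarrow> character D k x = (\<Prod>i\<in>D. exp (2 * pi * \<i> * complex_of_real (real_of_int (k i) * x i)))"
  unfolding character_def by (simp add: sum_distrib_left exp_sum)

lemma measurable_character [measurable]: "character D k \<in> borel_measurable (torus D)"
  unfolding character_def by measurable

lemma freqs_add: "k \<in> freqs D \<Longrightarrow> l \<in> freqs D \<Longrightarrow> k + l \<in> freqs D"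
  and freqs_uminus: "k \<in> freqs D \<Longrightarrow> - k \<in> freqs D"
  and zero_freqs: "0 \<in> freqs D"
  unfolding freqs_def by auto

lemma supp_subset_if_freqs: "k \<in> freqs D \<Longrightarrow> supp k \<subseteq> D"
  unfolding supp_def freqs_def by auto

lemma countable_freqs:
  assumes "finite D"
  shows "countable (freqs D)"
proof -
  have "inj_on (\<lambda>k. restrict k D) (freqs D)"
    unfolding inj_on_def freqs_def restrict_def by (auto simp: fun_eq_iff) metis
  moreover have "(\<lambda>k. restrict k D) ` freqs D \<subseteq> PiE D (\<lambda>_. UNIV :: int set)"
    by auto
  moreover have "countable (PiE D (\<lambda>_. UNIV :: int set))"
    using assms by (simp add: countable_PiE)
  ultimately show ?thesis
    by (meson countable_image_inj_on countable_subset)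
qed

lemma integral_unit_interval_exp:
  fixes m :: int
  shows "(\<integral>t. exp (2 * pi * \<i> * complex_of_real (real_of_int m * t)) \<partial>unit_interval)
     = (if m = 0 then 1 else 0)"
proof (cases "m = 0")
  case True
  then show ?thesis
    using unit_interval.prob_space by (simp add: space_restrict_space)
next
  case False
  define c where "c = 2 * pi * \<i> * of_int m"
  have "c \<noteq> 0" using False by (simp add: c_def)
  have "(\<integral>t. exp (2 * pi * \<i> * complex_of_real (real_of_int m * t)) \<partial>unit_interval)
      = (\<integral>t. indicator {0..<1} t *\<^sub>R exp (c * complex_of_real t) \<partial>lborel)"
    by (subst integral_restrict_space) (auto simp: c_def mult_ac)
  also have "\<dots> = (\<integral>t. indicator {0..1} t *\<^sub>R exp (c * complex_of_real t) \<partial>lborel)"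
    by (rule integral_cong_AE)
       (auto intro!: eventually_mono[OF AE_lborel_singleton[of 1]] simp: indicator_def)
  also have "\<dots> = exp (c * complex_of_real 1) / c - exp (c * complex_of_real 0) / c"
  proof (rule integral_FTC_atLeastAtMost)
    fix x :: real
    have "((\<lambda>z. exp (c * z) / c) has_field_derivative exp (c * complex_of_real x)) (at (complex_of_real x))"
      using \<open>c \<noteq> 0\<close> by (auto intro!: derivative_eq_intros)
    then show "((\<lambda>t. exp (c * complex_of_real t) / c) has_vector_derivative exp (c * complex_of_real x))
        (at x within {0..1})"
      by (rule has_vector_derivative_real_field)
  qed (auto intro!: continuous_intros)
  also have "\<dots> = 0"
  proof -
    have "exp c = 1"
      using exp_integer_2pi[of "of_int m"] by (simp add: c_def mult_ac)
    then show ?thesis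
      by simp
  qed
  finally show ?thesis
    using False by simp
qed

lemma integral_torus_character:
  assumes "finite D"
  shows "(\<integral>x. character D k x \<partial>torus D) = (if \<forall>i\<in>D. k i = 0 then 1 else 0)"
proof -
  have integrable: "integrable unit_interval (\<lambda>t. exp (2 * pi * \<i> * complex_of_real (real_of_int m * t)))"
    for m :: int
    by (rule unit_interval.integrable_const_bound[where B=1])
       (auto intro: measurable_restrict_space1)
  have "(\<integral>x. character D k x \<partial>torus D)
      = (\<Prod>i\<in>D. \<integral>t. exp (2 * pi * \<i> * complex_of_real (real_of_int (k i) * t)) \<partial>unit_interval)"
    unfolding torus_def character_eq_prod[OF assms]
    using integrable by (intro unit_product.product_integral_prod[OF assms]) simp
  also have "\<dots> = (\<Prod>i\<in>D. if k i = 0 then 1 else 0)"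
    by (simp only: integral_unit_interval_exp)
  also have "\<dots> = (if \<forall>i\<in>D. k i = 0 then 1 else 0)"
    using assms by (induction D rule: finite_induct) auto
  finally show ?thesis .
qed

section \<open>Fourier coefficients determine an integrable function\<close>

inductive_set trig_poly :: "nat set \<Rightarrow> ((nat \<Rightarrow> real) \<Rightarrow> complex) set" for D where
  character: "k \<in> freqs D \<Longrightarrow> character D k \<in> trig_poly D"
| add: "\<phi> \<in> trig_poly D \<Longrightarrow> \<psi> \<in> trig_poly D \<Longrightarrow> (\<lambda>x. \<phi> x + \<psi> x) \<in> trig_poly D"
| scale: "\<phi> \<in> trig_poly D \<Longrightarrow> (\<lambda>x. a * \<phi> x) \<in> trig_poly D"

lemma trig_poly_const: "(\<lambda>x. a) \<in> trig_poly D"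
  using trig_poly.scale[OF trig_poly.character[OF zero_freqs], of a] by simp

lemma trig_poly_mult_character:
  assumes "\<phi> \<in> trig_poly D" "k \<in> freqs D"
  shows "(\<lambda>x. \<phi> x * character D k x) \<in> trig_poly D"
  using assms(1)
proof induction
  case (character l)
  then show ?case
    using assms(2) by (simp add: character_mult trig_poly.character freqs_add)
next
  case (add \<phi> \<psi>)
  then show ?case
    using trig_poly.add[OF add.IH] by (simp add: distrib_right)
next
  case (scale \<phi> a)
  then show ?case
    using trig_poly.scale[OF scale.IH, of a] by (simp add: mult.assoc)
qed

lemma trig_poly_mult:
  assumes "\<phi> \<in> trig_poly D" "\<psi> \<in> trig_poly D"
  shows "(\<lambda>x. \<phi> x * \<psi> x) \<in> trig_poly D"
  using assms(2)
proof induction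
  case (character k)
  then show ?case
    by (rule trig_poly_mult_character[OF assms(1)])
next
  case (add \<psi>1 \<psi>2)
  then show ?case
    using trig_poly.add[OF add.IH] by (simp add: distrib_left)
next
  case (scale \<psi> a)
  then show ?case
    using trig_poly.scale[OF scale.IH, of a] by (simp add: mult_ac)
qed

lemma trig_poly_Re_character:
  assumes "k \<in> freqs D"
  shows "(\<lambda>x. complex_of_real (Re (character D k x))) \<in> trig_poly D"
proof -
  have "(\<lambda>x. (1/2) * character D k x + (1/2) * character D (- k) x) \<in> trig_poly D"
    using assms by (intro trig_poly.intros freqs_uminus)
  moreover have "complex_of_real (Re w) = (1/2) * w + (1/2) * cnj w" for w
    by (simp add: complex_eq_iff)
  ultimately show ?thesis
    by (simp add: cnj_character)
qed

lemma trig_poly_Im_character: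
  assumes "k \<in> freqs D"
  shows "(\<lambda>x. complex_of_real (Im (character D k x))) \<in> trig_poly D"
proof -
  have "(\<lambda>x. (- \<i>/2) * character D k x + (\<i>/2) * character D (- k) x) \<in> trig_poly D"
    using assms by (intro trig_poly.intros freqs_uminus)
  moreover have "complex_of_real (Im w) = (- \<i>/2) * w + (\<i>/2) * cnj w" for w
    by (simp add: complex_eq_iff)
  ultimately show ?thesis
    by (simp add: cnj_character)
qed

lemma measurable_trig_poly: "\<phi> \<in> trig_poly D \<Longrightarrow> \<phi> \<in> borel_measurable (torus D)"
  by (induction rule: trig_poly.induct) auto

lemma bounded_trig_poly: "\<phi> \<in> trig_poly D \<Longrightarrow> \<exists>B. \<forall>x. norm (\<phi> x) \<le> B"
proof (induction rule: trig_poly.induct)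
  case (character k)
  then show ?case by auto
next
  case (add \<phi> \<psi>)
  then obtain B1 B2 where "\<forall>x. norm (\<phi> x) \<le> B1" "\<forall>x. norm (\<psi> x) \<le> B2"
    by auto
  then have "\<forall>x. norm (\<phi> x + \<psi> x) \<le> B1 + B2"
    by (meson add_mono norm_triangle_le)
  then show ?case by blast
next
  case (scale \<phi> a)
  then obtain B where "\<forall>x. norm (\<phi> x) \<le> B"
    by auto
  then have "\<forall>x. norm (a * \<phi> x) \<le> norm a * B"
    by (simp add: norm_mult mult_left_mono)
  then show ?case by blast
qed

lemma integrable_mult_trig_poly:
  assumes "integrable (torus D) h" "\<phi> \<in> trig_poly D"
  shows "integrable (torus D) (\<lambda>x. h x * \<phi> x)"
proof -
  obtain B where "\<forall>x. norm (\<phi> x) \<le> B"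
    using bounded_trig_poly[OF assms(2)] by blast
  then show ?thesis
    by (intro integrable_mult_bounded[OF assms(1) measurable_trig_poly[OF assms(2)]]) auto
qed

lemma integral_mult_trig_poly_eq_0:
  assumes h: "integrable (torus D) h"
    and coeff: "\<And>k. k \<in> freqs D \<Longrightarrow> fourier_coeff D h k = 0"
    and "\<phi> \<in> trig_poly D"
  shows "(\<integral>x. h x * \<phi> x \<partial>torus D) = 0"
  using assms(3)
proof induction
  case (character k)
  then show ?case
    using coeff[OF freqs_uminus] by (simp add: fourier_coeff_eq_integral_character)
next
  case (add \<phi> \<psi>)
  have "(\<integral>x. h x * (\<phi> x + \<psi> x) \<partial>torus D) = (\<integral>x. h x * \<phi> x + h x * \<psi> x \<partial>torus D)"
    by (simp add: distrib_left)
  also have "\<dots> = 0"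
    using add integrable_mult_trig_poly[OF h] by simp
  finally show ?case .
next
  case (scale \<phi> a)
  have "(\<integral>x. h x * (a * \<phi> x) \<partial>torus D) = (\<integral>x. a * (h x * \<phi> x) \<partial>torus D)"
    by (simp add: mult_ac)
  also have "\<dots> = 0"
    using scale.IH by simp
  finally show ?case .
qed

definition circle_embedding :: "nat set \<Rightarrow> (nat \<Rightarrow> real) \<Rightarrow> (nat \<Rightarrow> complex)" where
  "circle_embedding D x = (\<lambda>i. if i \<in> D then exp (2 * pi * \<i> * complex_of_real (x i)) else 0)"

definition circles :: "nat set \<Rightarrow> (nat \<Rightarrow> complex) set" where
  "circles D = PiE UNIV (\<lambda>i. if i \<in> D then sphere 0 1 else {0})"

lemma circle_embedding_in_circles: "circle_embedding D x \<in> circles D"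
  using norm_exp_2pi_i by (auto simp: circle_embedding_def circles_def)

lemma compact_circles: "compact (circles D)"
proof -
  have "compactin (product_topology (\<lambda>_. euclidean) UNIV) (circles D)"
    unfolding circles_def compactin_PiE by auto
  then show ?thesis
    by (metis compactin_euclidean_iff euclidean_product_topology)
qed

lemma measurable_circle_embedding [measurable]: "circle_embedding D \<in> borel_measurable (torus D)"
proof (rule measurable_coordinatewise_then_product)
  fix i
  show "(\<lambda>x. circle_embedding D x i) \<in> borel_measurable (torus D)"
    unfolding circle_embedding_def by (cases "i \<in> D") auto
qed

inductive_set coord_poly :: "((nat \<Rightarrow> complex) \<Rightarrow> real) set" where
  const: "(\<lambda>_. c) \<in> coord_poly"
| Re: "(\<lambda>z. Re (z i)) \<in> coord_poly"
| Im: "(\<lambda>z. Im (z i)) \<in> coord_poly"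
| add: "p \<in> coord_poly \<Longrightarrow> q \<in> coord_poly \<Longrightarrow> (\<lambda>z. p z + q z) \<in> coord_poly"
| mult: "p \<in> coord_poly \<Longrightarrow> q \<in> coord_poly \<Longrightarrow> (\<lambda>z. p z * q z) \<in> coord_poly"

lemma continuous_on_coord_poly: "p \<in> coord_poly \<Longrightarrow> continuous_on S p"
proof (induction rule: coord_poly.induct)
  case (const c)
  then show ?case
    by (rule continuous_on_const)
next
  case (Re i)
  show ?case
    by (rule continuous_on_Re[OF continuous_on_subset[OF continuous_on_product_coordinates]]) simp
next
  case (Im i)
  show ?case
    by (rule continuous_on_Im[OF continuous_on_subset[OF continuous_on_product_coordinates]]) simp
next
  case (add p q)
  then show ?case
    by (intro continuous_on_add)
next
  case (mult p q)
  then show ?case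
    by (intro continuous_on_mult)
qed

lemma coord_poly_separates:
  assumes "z \<noteq> z'"
  shows "\<exists>p\<in>coord_poly. p z \<noteq> p z'"
proof -
  obtain i where "z i \<noteq> z' i"
    using assms by (metis ext)
  then consider "Re (z i) \<noteq> Re (z' i)" | "Im (z i) \<noteq> Im (z' i)"
    using complex_eqI by blast
  then show ?thesis
  proof cases
    case 1
    then show ?thesis
      using coord_poly.Re[of i] by (intro bexI[of _ "\<lambda>z. Re (z i)"])
  next
    case 2
    then show ?thesis
      using coord_poly.Im[of i] by (intro bexI[of _ "\<lambda>z. Im (z i)"])
  qed
qed

lemma function_ring_on_coord_poly: "function_ring_on coord_poly (circles D)"
proof unfold_locales
  show "compact (circles D)"
    by (rule compact_circles)
  show "continuous_on (circles D) p" if "p \<in> coord_poly" for p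
    using that by (rule continuous_on_coord_poly)
  show "\<exists>p\<in>coord_poly. p z \<noteq> p z'" if "z \<noteq> z'" for z z'
    using that by (rule coord_poly_separates)
qed (fact coord_poly.intros)+

definition unit_freq :: "nat \<Rightarrow> nat \<Rightarrow> int" where
  "unit_freq i = (\<lambda>j. if j = i then 1 else 0)"

lemma unit_freq_in_freqs: "i \<in> D \<Longrightarrow> unit_freq i \<in> freqs D"
  unfolding unit_freq_def freqs_def by auto

lemma circle_embedding_eq_character:
  assumes "i \<in> D" "finite D"
  shows "circle_embedding D x i = character D (unit_freq i) x"
proof -
  have "(\<Sum>j\<in>D. real_of_int (unit_freq i j) * x j) = (\<Sum>j\<in>D. if j = i then x j else 0)"
    by (rule sum.cong) (auto simp: unit_freq_def)
  then show ?thesis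
    using assms unfolding circle_embedding_def character_def by simp
qed

lemma coord_poly_comp_circle_embedding:
  assumes "finite D" "p \<in> coord_poly"
  shows "(\<lambda>x. complex_of_real (p (circle_embedding D x))) \<in> trig_poly D"
  using assms(2)
proof induction
  case (const c)
  then show ?case
    by (simp add: trig_poly_const)
next
  case (Re i)
  then show ?case
    using trig_poly_Re_character[OF unit_freq_in_freqs] circle_embedding_eq_character[OF _ assms(1)]
    by (cases "i \<in> D") (simp_all add: circle_embedding_def trig_poly_const)
next
  case (Im i)
  then show ?case
    using trig_poly_Im_character[OF unit_freq_in_freqs] circle_embedding_eq_character[OF _ assms(1)]
    by (cases "i \<in> D") (simp_all add: circle_embedding_def trig_poly_const)
next
  case (add p q)
  then show ?case
    using trig_poly.add[OF add.IH] by simp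
next
  case (mult p q)
  then show ?case
    using trig_poly_mult[OF mult.IH] by simp
qed

definition circle_angle :: "complex \<Rightarrow> real" where
  "circle_angle w = frac (Arg w / (2 * pi))"

lemma circle_angle_exp:
  assumes "0 \<le> t" "t < 1"
  shows "circle_angle (exp (2 * pi * \<i> * complex_of_real t)) = t"
proof -
  obtain n :: int where "2 * pi * t - of_int n * (2 * pi) = Arg (exp (2 * pi * \<i> * complex_of_real t))"
    using Arg_exp_diff_2pi[of "2 * pi * \<i> * complex_of_real t"] by auto
  then have "Arg (exp (2 * pi * \<i> * complex_of_real t)) / (2 * pi) = t + of_int (- n)"
    by (simp add: field_simps)
  then have "circle_angle (exp (2 * pi * \<i> * complex_of_real t)) = frac (t + of_int (- n))"
    unfolding circle_angle_def by (simp only:)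
  also have "\<dots> = t"
    unfolding frac_add_of_int_right frac_eq using assms by simp
  finally show ?thesis .
qed

lemma measurable_circle_angle [measurable]: "circle_angle \<in> borel_measurable borel"
proof -
  have "Arg \<in> borel_measurable borel"
    unfolding Arg_def by measurable
  then have scaled: "(\<lambda>w. Arg w / (2 * pi)) \<in> borel_measurable borel"
    by measurable
  have "(\<lambda>w. real_of_int \<lfloor>Arg w / (2 * pi)\<rfloor>) \<in> borel_measurable borel"
    using measurable_compose[OF scaled borel_measurable_real_floor] by simp
  with scaled show ?thesis
    unfolding circle_angle_def frac_def by (rule borel_measurable_diff)
qed

definition torus_angles :: "nat set \<Rightarrow> (nat \<Rightarrow> complex) \<Rightarrow> (nat \<Rightarrow> real)" where
  "torus_angles D z = (\<lambda>i. if i \<in> D then circle_angle (z i) else undefined)"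

lemma measurable_torus_angles: "torus_angles D \<in> measurable borel (torus D)"
  unfolding torus_def torus_angles_def
proof (rule measurable_PiM_single')
  fix i assume "i \<in> D"
  have "(\<lambda>z::nat \<Rightarrow> complex. circle_angle (z i)) \<in> borel_measurable borel"
    by (rule measurable_compose[OF measurable_product_coordinates measurable_circle_angle])
  then have "(\<lambda>z::nat \<Rightarrow> complex. circle_angle (z i)) \<in> measurable borel unit_interval"
    by (intro measurable_restrict_space2) (simp_all add: circle_angle_def frac_lt_1)
  then show "(\<lambda>z. if i \<in> D then circle_angle (z i) else undefined) \<in> measurable borel unit_interval"
    using \<open>i \<in> D\<close> by simp
qed (auto simp: space_restrict_space circle_angle_def frac_lt_1)

lemma torus_angles_circle_embedding:
  assumes "x \<in> space (torus D)"
  shows "torus_angles D (circle_embedding D x) = x"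
proof -
  have "\<forall>i\<in>D. 0 \<le> x i \<and> x i < 1" and outside: "\<forall>i. i \<notin> D \<longrightarrow> x i = undefined"
    using assms by (auto simp: space_torus PiE_iff extensional_def)
  then have "circle_angle (exp (2 * pi * \<i> * complex_of_real (x i))) = x i" if "i \<in> D" for i
    using that by (intro circle_angle_exp) auto
  with outside show ?thesis
    by (auto simp: torus_angles_def circle_embedding_def fun_eq_iff)
qed

text \<open>The embedding has a measurable left inverse, so it generates the \<sigma>-algebra of the torus.\<close>

lemma sets_torus_subset_sigma_closed:
  "sets (torus D) \<subseteq> sigma_sets (space (torus D)) {circle_embedding D -` C \<inter> space (torus D) | C. closed C}"
proof
  let ?\<Omega> = "space (torus D)"
  have "sets (vimage_algebra ?\<Omega> (circle_embedding D) borel)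
      = sets (vimage_algebra ?\<Omega> (circle_embedding D) (sigma UNIV (Collect closed)))"
    by (simp add: borel_eq_closed)
  also have "\<dots> = sets (sigma ?\<Omega> {circle_embedding D -` C \<inter> ?\<Omega> | C. C \<in> Collect closed})"
    by (subst vimage_algebra_sigma) auto
  also have "\<dots> = sigma_sets ?\<Omega> {circle_embedding D -` C \<inter> ?\<Omega> | C. C \<in> Collect closed}"
    by (rule sets_measure_of) auto
  finally have generated: "sets (vimage_algebra ?\<Omega> (circle_embedding D) borel)
      = sigma_sets ?\<Omega> {circle_embedding D -` C \<inter> ?\<Omega> | C. closed C}"
    by simp
  fix B assume B: "B \<in> sets (torus D)"
  have "torus_angles D -` B \<inter> space borel \<in> sets borel"
    by (rule measurable_sets[OF measurable_torus_angles B])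
  then have "circle_embedding D -` (torus_angles D -` B \<inter> space borel) \<inter> ?\<Omega>
      \<in> sets (vimage_algebra ?\<Omega> (circle_embedding D) borel)"
    by (rule in_vimage_algebra)
  moreover have "circle_embedding D -` (torus_angles D -` B \<inter> space borel) \<inter> ?\<Omega> = B"
    using sets.sets_into_space[OF B] torus_angles_circle_embedding by auto
  ultimately show "B \<in> sigma_sets ?\<Omega> {circle_embedding D -` C \<inter> ?\<Omega> | C. closed C}"
    using generated by simp
qed

context
  fixes D :: "nat set" and h :: "(nat \<Rightarrow> real) \<Rightarrow> complex"
  assumes D: "finite D" and h: "integrable (torus D) h"
    and coeff: "\<And>k. k \<in> freqs D \<Longrightarrow> fourier_coeff D h k = 0"
begin

text \<open>Stone--Weierstrass on the compact product of circles approximates \<open>f\<close> uniformly by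
  members of \<open>coord_poly\<close>, which become trigonometric polynomials on the torus.\<close>

lemma norm_integral_mult_continuous_circle_le:
  assumes f: "continuous_on UNIV f" and bounded: "\<And>z. \<bar>f z\<bar> \<le> B" and "0 < e"
  shows "norm (\<integral>x. h x * complex_of_real (f (circle_embedding D x)) \<partial>torus D) \<le> e * (\<integral>x. norm (h x) \<partial>torus D)"
proof -
  interpret function_ring_on coord_poly "circles D"
    by (rule function_ring_on_coord_poly)
  obtain p where p: "p \<in> coord_poly" "\<forall>z\<in>circles D. \<bar>f z - p z\<bar> < e"
    using Stone_Weierstrass_basic[OF continuous_on_subset[OF f] \<open>0 < e\<close>] by blast
  define \<phi> where "\<phi> x = complex_of_real (p (circle_embedding D x))" for x
  have \<phi>: "\<phi> \<in> trig_poly D"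
    unfolding \<phi>_def[abs_def] by (rule coord_poly_comp_circle_embedding[OF D p(1)])
  have [measurable]: "f \<in> borel_measurable borel"
    by (rule borel_measurable_continuous_onI[OF f])
  have integrable_f: "integrable (torus D) (\<lambda>x. h x * complex_of_real (f (circle_embedding D x)))"
    by (rule integrable_mult_bounded[OF h, where B=B]) (auto simp: bounded)
  have "(\<integral>x. h x * complex_of_real (f (circle_embedding D x)) \<partial>torus D)
      = (\<integral>x. h x * complex_of_real (f (circle_embedding D x)) - h x * \<phi> x \<partial>torus D)"
    using integrable_f integrable_mult_trig_poly[OF h \<phi>] integral_mult_trig_poly_eq_0[OF h coeff \<phi>]
    by simp
  also have "norm \<dots> \<le> (\<integral>x. norm (h x * complex_of_real (f (circle_embedding D x)) - h x * \<phi> x) \<partial>torus D)"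
    by (rule integral_norm_bound)
  also have "\<dots> \<le> (\<integral>x. e * norm (h x) \<partial>torus D)"
  proof (rule integral_mono)
    fix x
    have "\<bar>f (circle_embedding D x) - p (circle_embedding D x)\<bar> \<le> e"
      using p(2) circle_embedding_in_circles[of D x] by force
    then have "norm (h x) * \<bar>f (circle_embedding D x) - p (circle_embedding D x)\<bar> \<le> norm (h x) * e"
      by (simp add: mult_left_mono)
    then show "norm (h x * complex_of_real (f (circle_embedding D x)) - h x * \<phi> x) \<le> e * norm (h x)"
      by (simp add: \<phi>_def norm_mult mult.commute flip: right_diff_distrib of_real_diff)
  qed (use integrable_f integrable_mult_trig_poly[OF h \<phi>] h in auto)
  finally show ?thesis
    by simp
qed

lemma integral_mult_continuous_circle_eq_0:
  assumes f: "continuous_on UNIV f" and bounded: "\<And>z. \<bar>f z\<bar> \<le> B"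
  shows "(\<integral>x. h x * complex_of_real (f (circle_embedding D x)) \<partial>torus D) = 0"
proof -
  let ?I = "\<integral>x. h x * complex_of_real (f (circle_embedding D x)) \<partial>torus D"
  define N where "N = (\<integral>x. norm (h x) \<partial>torus D)"
  have "0 \<le> N"
    by (simp add: N_def)
  have "norm ?I \<le> 0 + \<epsilon>" if "0 < \<epsilon>" for \<epsilon>
  proof -
    have "0 < \<epsilon> / (N + 1)"
      using that \<open>0 \<le> N\<close> by simp
    then have "norm ?I \<le> (\<epsilon> / (N + 1)) * N"
      unfolding N_def by (rule norm_integral_mult_continuous_circle_le[OF f bounded])
    also have "\<dots> \<le> \<epsilon>"
      using that \<open>0 \<le> N\<close> by (simp add: field_simps)
    finally show ?thesis
      by simp
  qed
  then show ?thesis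
    using field_le_epsilon[of "norm ?I" 0] by simp
qed

lemma set_integral_closed_circle_preimage_eq_0:
  assumes C: "closed C"
  shows "(\<integral>x. indicator (circle_embedding D -` C \<inter> space (torus D)) x *\<^sub>R h x \<partial>torus D) = 0"
proof (cases "C = {}")
  case True
  then show ?thesis by simp
next
  case False
  define g where "g n z = max 0 (1 - real n * infdist z C)" for n z
  have g_continuous: "continuous_on UNIV (g n)" for n
    unfolding g_def by (intro continuous_intros)
  have g_bounded: "\<bar>g n z\<bar> \<le> 1" for n z
    using infdist_nonneg[of z C] by (auto simp: g_def)
  have [measurable]: "g n \<in> borel_measurable borel" for n
    by (rule borel_measurable_continuous_onI[OF g_continuous])
  have [measurable]: "C \<in> sets borel"
    using C by (rule borel_closed)
  have g_indicator: "(\<lambda>n. g n z) \<longlonglongrightarrow> indicator C z" for z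
    unfolding g_def by (rule tendsto_indicator_closed[OF C False])
  have "(\<lambda>n. \<integral>x. h x * complex_of_real (g n (circle_embedding D x)) \<partial>torus D)
      \<longlonglongrightarrow> (\<integral>x. h x * complex_of_real (indicator C (circle_embedding D x)) \<partial>torus D)"
  proof (rule integral_dominated_convergence[where w="\<lambda>x. norm (h x)"])
    show "AE x in torus D. norm (h x * complex_of_real (g n (circle_embedding D x))) \<le> norm (h x)" for n
      using g_bounded by (intro AE_I2) (simp add: norm_mult mult_left_le)
  qed (use borel_measurable_integrable[OF h] h in
       \<open>auto intro!: AE_I2 tendsto_mult tendsto_of_real g_indicator\<close>)
  moreover have "(\<integral>x. h x * complex_of_real (g n (circle_embedding D x)) \<partial>torus D) = 0" for n
    by (rule integral_mult_continuous_circle_eq_0[OF g_continuous g_bounded])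
  ultimately have "(\<integral>x. h x * complex_of_real (indicator C (circle_embedding D x)) \<partial>torus D) = 0"
    by (simp add: LIMSEQ_const_iff)
  moreover have "(\<integral>x. indicator (circle_embedding D -` C \<inter> space (torus D)) x *\<^sub>R h x \<partial>torus D)
      = (\<integral>x. h x * complex_of_real (indicator C (circle_embedding D x)) \<partial>torus D)"
    by (rule Bochner_Integration.integral_cong) (auto simp: indicator_def)
  ultimately show ?thesis
    by simp
qed

theorem fourier_coeff_zero_imp_AE_zero: "AE x in torus D. h x = 0"
proof (rule torus.AE_zero_if_set_integrals_zero_on_generator[OF h])
  let ?G = "{circle_embedding D -` C \<inter> space (torus D) | C. closed C}"
  show "Int_stable ?G"
  proof (rule Int_stableI)
    fix A B assume "A \<in> ?G" "B \<in> ?G"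
    then obtain C C' where "closed C" "closed C'"
      and "A = circle_embedding D -` C \<inter> space (torus D)" "B = circle_embedding D -` C' \<inter> space (torus D)"
      by blast
    then show "A \<inter> B \<in> ?G"
      by (intro CollectI exI[of _ "C \<inter> C'"]) auto
  qed
  show "?G \<subseteq> sets (torus D)"
    using measurable_sets[OF measurable_circle_embedding borel_closed] by auto
  show "sets (torus D) \<subseteq> sigma_sets (space (torus D)) ?G"
    by (rule sets_torus_subset_sigma_closed)
  show "(\<integral>x. h x \<partial>torus D) = 0"
    using coeff[OF zero_freqs] by (simp add: fourier_coeff_def)
qed (auto intro: set_integral_closed_circle_preimage_eq_0)

end

section \<open>Absolutely convergent Fourier series and their ANOVA terms\<close>

definition fourier_sum :: "nat set \<Rightarrow> ((nat \<Rightarrow> int) \<Rightarrow> complex) \<Rightarrow> (nat \<Rightarrow> int) set \<Rightarrow> (nat \<Rightarrow> real) \<Rightarrow> complex" where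
  "fourier_sum D c K x = (\<Sum>\<^sub>\<infinity>k\<in>K. c k * character D k x)"

context
  fixes D :: "nat set" and c :: "(nat \<Rightarrow> int) \<Rightarrow> complex"
  assumes D: "finite D" and c: "(\<lambda>k. norm (c k)) summable_on freqs D"
begin

lemma summable_on_fourier_terms:
  assumes "K \<subseteq> freqs D"
  shows "(\<lambda>k. c k * character D k x) summable_on K"
proof -
  have "(\<lambda>k. norm (c k * character D k x)) summable_on K"
    using summable_on_subset_banach[OF c assms] by (simp add: norm_mult)
  then show ?thesis
    by (rule abs_summable_summable)
qed

lemma fourier_sum_Un:
  assumes "A \<subseteq> freqs D" "B \<subseteq> freqs D" "A \<inter> B = {}"
  shows "fourier_sum D c (A \<union> B) x = fourier_sum D c A x + fourier_sum D c B x"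
  unfolding fourier_sum_def using assms by (intro infsum_Un_disjoint summable_on_fourier_terms)

lemma fourier_sum_UN:
  assumes "finite V" "\<And>v. v \<in> V \<Longrightarrow> K v \<subseteq> freqs D"
    and "\<And>v w. v \<in> V \<Longrightarrow> w \<in> V \<Longrightarrow> v \<noteq> w \<Longrightarrow> K v \<inter> K w = {}"
  shows "fourier_sum D c (\<Union>v\<in>V. K v) x = (\<Sum>v\<in>V. fourier_sum D c (K v) x)"
  using assms
proof (induction V rule: finite_induct)
  case empty
  then show ?case by (simp add: fourier_sum_def)
next
  case (insert v V)
  have "K v \<inter> (\<Union>w\<in>V. K w) = {}"
    using insert.prems(2)[of v] insert.hyps(2) by fastforce
  then have "fourier_sum D c (K v \<union> (\<Union>w\<in>V. K w)) x
      = fourier_sum D c (K v) x + fourier_sum D c (\<Union>w\<in>V. K w) x"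
    using insert.prems(1) by (intro fourier_sum_Un) auto
  then show ?case
    using insert by simp
qed

lemma integrable_fourier_sum: "integrable (torus D) (fourier_sum D c (freqs D))"
  unfolding fourier_sum_def
  by (rule torus.integrable_infsum_bounded[OF countable_freqs[OF D] c]) auto

lemma fourier_coeff_fourier_sum:
  assumes m: "m \<in> freqs D"
  shows "fourier_coeff D (fourier_sum D c (freqs D)) m = c m"
proof -
  have "fourier_coeff D (fourier_sum D c (freqs D)) m
      = (\<integral>x. (\<Sum>\<^sub>\<infinity>k\<in>freqs D. c k * character D (k + - m) x) \<partial>torus D)"
  proof (unfold fourier_coeff_eq_integral_character, rule Bochner_Integration.integral_cong[OF refl])
    fix x
    have "fourier_sum D c (freqs D) x * character D (- m) x
        = (\<Sum>\<^sub>\<infinity>k\<in>freqs D. c k * character D k x * character D (- m) x)"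
      unfolding fourier_sum_def by (rule infsum_cmult_left[symmetric]) (rule summable_on_fourier_terms, simp)
    then show "fourier_sum D c (freqs D) x * character D (- m) x
        = (\<Sum>\<^sub>\<infinity>k\<in>freqs D. c k * character D (k + - m) x)"
      by (simp add: mult.assoc character_mult)
  qed
  also have "\<dots> = (\<Sum>\<^sub>\<infinity>k\<in>freqs D. c k * (\<integral>x. character D (k + - m) x \<partial>torus D))"
    by (rule torus.integral_infsum_bounded[OF countable_freqs[OF D] c]) auto
  also have "\<dots> = (\<Sum>\<^sub>\<infinity>k\<in>freqs D. if k = m then c k else 0)"
  proof (rule infsum_cong)
    fix k assume "k \<in> freqs D"
    then have "(\<forall>i\<in>D. (k + - m) i = 0) \<longleftrightarrow> k = m"
      using m unfolding freqs_def by (auto simp: fun_eq_iff)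
    then show "c k * (\<integral>x. character D (k + - m) x \<partial>torus D) = (if k = m then c k else 0)"
      by (simp add: integral_torus_character[OF D])
  qed
  also have "\<dots> = (\<Sum>\<^sub>\<infinity>k\<in>{m}. c k)"
    by (rule infsum_cong_neutral) (use m in auto)
  also have "\<dots> = c m"
    by simp
  finally show ?thesis .
qed

lemma character_merge:
  assumes "u \<subseteq> D"
  shows "character D k (\<lambda>i. if i \<in> u then x i else y i) = character u k x * character (D - u) k y"
proof -
  have "(\<Sum>i\<in>D. real_of_int (k i) * (if i \<in> u then x i else y i))
      = (\<Sum>i\<in>D - u. real_of_int (k i) * (if i \<in> u then x i else y i))
        + (\<Sum>i\<in>u. real_of_int (k i) * (if i \<in> u then x i else y i))"
    by (rule sum.subset_diff[OF assms D])
  also have "\<dots> = (\<Sum>i\<in>D - u. real_of_int (k i) * y i) + (\<Sum>i\<in>u. real_of_int (k i) * x i)"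
    by (intro arg_cong2[where f="(+)"] sum.cong) auto
  finally show ?thesis
    unfolding character_def by (simp add: exp_add[symmetric] distrib_left algebra_simps)
qed

lemma character_subset:
  assumes "u \<subseteq> D" "\<forall>i\<in>D - u. k i = 0"
  shows "character u k x = character D k x"
  using sum.subset_diff[OF assms(1) D, of "\<lambda>i. real_of_int (k i) * x i"] assms(2)
  unfolding character_def by simp

lemma proj_fourier_sum:
  assumes u: "u \<subseteq> D"
  shows "proj D u (fourier_sum D c (freqs D)) x = fourier_sum D c {k \<in> freqs D. supp k \<subseteq> u} x"
proof -
  have "proj D u (fourier_sum D c (freqs D)) x
      = (\<integral>y. (\<Sum>\<^sub>\<infinity>k\<in>freqs D. (c k * character u k x) * character (D - u) k y) \<partial>torus (D - u))"
    unfolding proj_def fourier_sum_def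
    by (intro Bochner_Integration.integral_cong refl infsum_cong) (simp add: character_merge[OF u] mult.assoc)
  also have "\<dots> = (\<Sum>\<^sub>\<infinity>k\<in>freqs D. (c k * character u k x) * (\<integral>y. character (D - u) k y \<partial>torus (D - u)))"
    using c by (intro torus.integral_infsum_bounded countable_freqs[OF D]) (auto simp: norm_mult)
  also have "\<dots> = (\<Sum>\<^sub>\<infinity>k\<in>freqs D. if supp k \<subseteq> u then c k * character D k x else 0)"
  proof (rule infsum_cong)
    fix k assume "k \<in> freqs D"
    then have "(\<forall>i\<in>D - u. k i = 0) \<longleftrightarrow> supp k \<subseteq> u"
      unfolding freqs_def supp_def by auto
    then show "(c k * character u k x) * (\<integral>y. character (D - u) k y \<partial>torus (D - u))
        = (if supp k \<subseteq> u then c k * character D k x else 0)"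
      using character_subset[OF u, of k x] D by (auto simp: integral_torus_character)
  qed
  also have "\<dots> = fourier_sum D c {k \<in> freqs D. supp k \<subseteq> u} x"
    unfolding fourier_sum_def by (rule infsum_cong_neutral) auto
  finally show ?thesis .
qed

lemma anova_fourier_sum:
  "finite u \<Longrightarrow> u \<subseteq> D \<Longrightarrow> anova D (fourier_sum D c (freqs D)) u x = fourier_sum D c {k \<in> freqs D. supp k = u} x"
proof (induction u rule: finite_psubset_induct)
  case (psubset u)
  let ?f = "fourier_sum D c (freqs D)"
  have "(\<Sum>v\<in>Pow u - {u}. anova D ?f v x) = (\<Sum>v\<in>Pow u - {u}. fourier_sum D c {k \<in> freqs D. supp k = v} x)"
    using psubset by (intro sum.cong refl psubset.IH) (auto intro: finite_subset)
  also have "\<dots> = fourier_sum D c (\<Union>v\<in>Pow u - {u}. {k \<in> freqs D. supp k = v}) x"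
    using psubset.hyps by (intro fourier_sum_UN[symmetric]) auto
  also have "(\<Union>v\<in>Pow u - {u}. {k \<in> freqs D. supp k = v}) = {k \<in> freqs D. supp k \<subset> u}"
    by auto
  finally have lower: "(\<Sum>v\<in>Pow u - {u}. anova D ?f v x) = fourier_sum D c {k \<in> freqs D. supp k \<subset> u} x" .
  have "{k \<in> freqs D. supp k \<subseteq> u} = {k \<in> freqs D. supp k \<subset> u} \<union> {k \<in> freqs D. supp k = u}"
    by auto
  then have "proj D u ?f x = fourier_sum D c ({k \<in> freqs D. supp k \<subset> u} \<union> {k \<in> freqs D. supp k = u}) x"
    using proj_fourier_sum[OF psubset.prems] by simp
  also have "\<dots> = fourier_sum D c {k \<in> freqs D. supp k \<subset> u} x + fourier_sum D c {k \<in> freqs D. supp k = u} x"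
    by (rule fourier_sum_Un) auto
  finally show ?case
    using psubset.hyps lower by (subst anova.simps) simp
qed

lemma fourier_sum_minus_truncation:
  "fourier_sum D c (freqs D) x - truncation D ds (fourier_sum D c (freqs D)) x
     = fourier_sum D c {k \<in> freqs D. ds < card (supp k)} x"
proof -
  let ?low = "{k \<in> freqs D. card (supp k) \<le> ds}"
  have "truncation D ds (fourier_sum D c (freqs D)) x
      = (\<Sum>u\<in>{u. u \<subseteq> D \<and> card u \<le> ds}. fourier_sum D c {k \<in> freqs D. supp k = u} x)"
    unfolding truncation_def using D by (intro sum.cong refl anova_fourier_sum) (auto intro: finite_subset)
  also have "\<dots> = fourier_sum D c (\<Union>u\<in>{u. u \<subseteq> D \<and> card u \<le> ds}. {k \<in> freqs D. supp k = u}) x"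
    using D by (intro fourier_sum_UN[symmetric]) auto
  also have "(\<Union>u\<in>{u. u \<subseteq> D \<and> card u \<le> ds}. {k \<in> freqs D. supp k = u}) = ?low"
    using supp_subset_if_freqs by blast
  finally have low: "truncation D ds (fourier_sum D c (freqs D)) x = fourier_sum D c ?low x" .
  have "freqs D = ?low \<union> {k \<in> freqs D. ds < card (supp k)}"
    by auto
  then have "fourier_sum D c (freqs D) x = fourier_sum D c (?low \<union> {k \<in> freqs D. ds < card (supp k)}) x"
    by simp
  also have "\<dots> = fourier_sum D c ?low x + fourier_sum D c {k \<in> freqs D. ds < card (supp k)} x"
    by (rule fourier_sum_Un) auto
  finally show ?thesis
    by (simp add: low)
qed

end

lemma fourier_coeff_diff:
  assumes "integrable (torus D) f" "integrable (torus D) g"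
  shows "fourier_coeff D (\<lambda>x. f x - g x) k = fourier_coeff D f k - fourier_coeff D g k"
proof -
  have "integrable (torus D) (\<lambda>x. f x * character D (- k) x)"
    "integrable (torus D) (\<lambda>x. g x * character D (- k) x)"
    using assms by (auto intro: integrable_mult_bounded[where B=1])
  then show ?thesis
    unfolding fourier_coeff_eq_integral_character by (simp add: left_diff_distrib)
qed

lemma AE_eq_fourier_sum:
  assumes D: "finite D" and f: "integrable (torus D) f"
    and summable: "(\<lambda>k. norm (fourier_coeff D f k)) summable_on freqs D"
  shows "AE x in torus D. f x = fourier_sum D (fourier_coeff D f) (freqs D) x"
proof -
  let ?g = "fourier_sum D (fourier_coeff D f) (freqs D)"
  have g: "integrable (torus D) ?g"
    by (rule integrable_fourier_sum[OF D summable])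
  have "AE x in torus D. f x - ?g x = 0"
  proof (rule fourier_coeff_zero_imp_AE_zero[OF D])
    show "integrable (torus D) (\<lambda>x. f x - ?g x)"
      using f g by simp
    show "fourier_coeff D (\<lambda>x. f x - ?g x) k = 0" if "k \<in> freqs D" for k
      using fourier_coeff_fourier_sum[OF D summable that] by (simp add: fourier_coeff_diff[OF f g])
  qed
  then show ?thesis
    by simp
qed

lemma proj_eq_integral_merge:
  "proj D u f x = (\<integral>y. f (merge u (D - u) (restrict x u, y)) \<partial>torus (D - u))"
  unfolding proj_def
proof (rule Bochner_Integration.integral_cong[OF refl])
  fix y assume "y \<in> space (torus (D - u))"
  then have "\<forall>i. i \<notin> D - u \<longrightarrow> y i = undefined"
    by (auto simp: space_torus PiE_iff extensional_def)
  then show "f (\<lambda>i. if i \<in> u then x i else y i) = f (merge u (D - u) (restrict x u, y))"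
    by (auto simp: merge_def fun_eq_iff intro!: arg_cong[where f=f])
qed

lemma measurable_merge_torus:
  assumes "u \<subseteq> D"
  shows "merge u (D - u) \<in> measurable (torus u \<Otimes>\<^sub>M torus (D - u)) (torus D)"
  using measurable_merge[of u "D - u" "\<lambda>_. unit_interval"] assms
  unfolding torus_def by (simp add: Un_absorb1)

lemma distr_merge_torus:
  assumes "finite D" "u \<subseteq> D"
  shows "distr (torus u \<Otimes>\<^sub>M torus (D - u)) (torus D) (merge u (D - u)) = torus D"
  using unit_product.distr_merge[of u "D - u"] assms finite_subset[OF assms(2,1)]
  unfolding torus_def by (simp add: Un_absorb1)

lemma distr_restrict_torus:
  assumes "finite D" "u \<subseteq> D"
  shows "distr (torus D) (torus u) (\<lambda>x. restrict x u) = torus u"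
  using unit_product.distr_restrict[of u D] assms unfolding torus_def by simp

lemma measurable_merge_restrict:
  assumes "u \<subseteq> D"
  shows "(\<lambda>p. merge u (D - u) (restrict (fst p) u, snd p))
    \<in> measurable (torus D \<Otimes>\<^sub>M torus (D - u)) (torus D)"
proof -
  have "(\<lambda>p. (restrict (fst p) u, snd p)) \<in> measurable (torus D \<Otimes>\<^sub>M torus (D - u)) (torus u \<Otimes>\<^sub>M torus (D - u))"
    unfolding torus_def using measurable_restrict_subset[OF assms] by measurable
  then show ?thesis
    using measurable_merge_torus[OF assms] by (rule measurable_compose)
qed

lemma measurable_proj:
  assumes "u \<subseteq> D" "f \<in> borel_measurable (torus D)"
  shows "proj D u f \<in> borel_measurable (torus D)"
proof -
  have "(\<lambda>p. f (merge u (D - u) (restrict (fst p) u, snd p))) \<in> borel_measurable (torus D \<Otimes>\<^sub>M torus (D - u))"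
    by (rule measurable_compose[OF measurable_merge_restrict[OF assms(1)] assms(2)])
  then have "(\<lambda>x. \<integral>y. f (merge u (D - u) (restrict x u, y)) \<partial>torus (D - u)) \<in> borel_measurable (torus D)"
    using torus.borel_measurable_lebesgue_integral[of "\<lambda>x y. f (merge u (D - u) (restrict x u, y))"]
    by (simp add: case_prod_beta')
  then show ?thesis
    by (simp add: proj_eq_integral_merge[abs_def])
qed

lemma AE_proj_eq:
  assumes D: "finite D" and u: "u \<subseteq> D"
    and f: "f \<in> borel_measurable (torus D)" and g: "g \<in> borel_measurable (torus D)"
    and fg: "AE x in torus D. f x = g x"
  shows "AE x in torus D. proj D u f x = proj D u g x"
proof -
  interpret pair_sigma_finite "torus u" "torus (D - u)"
    by (simp add: pair_sigma_finite_def prob_space_imp_sigma_finite[OF prob_space_torus])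
  note merge = measurable_merge_torus[OF u]
  have "AE p in distr (torus u \<Otimes>\<^sub>M torus (D - u)) (torus D) (merge u (D - u)). f p = g p"
    by (subst distr_merge_torus[OF D u]) (rule fg)
  then have "AE p in torus u \<Otimes>\<^sub>M torus (D - u). f (merge u (D - u) p) = g (merge u (D - u) p)"
    by (rule AE_distrD[OF merge])
  then have "AE x in torus u. AE y in torus (D - u). f (merge u (D - u) (x, y)) = g (merge u (D - u) (x, y))"
    by (rule AE_pair)
  then have "AE x in torus u. (\<integral>y. f (merge u (D - u) (x, y)) \<partial>torus (D - u))
      = (\<integral>y. g (merge u (D - u) (x, y)) \<partial>torus (D - u))"
    using AE_space
  proof eventually_elim
    case (elim x)
    show ?case
      by (intro integral_cong_AE elim(1) measurable_Pair2[OF _ elim(2)]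
          measurable_compose[OF merge f] measurable_compose[OF merge g])
  qed
  then have "AE x in distr (torus D) (torus u) (\<lambda>x. restrict x u).
      (\<integral>y. f (merge u (D - u) (x, y)) \<partial>torus (D - u)) = (\<integral>y. g (merge u (D - u) (x, y)) \<partial>torus (D - u))"
    by (subst distr_restrict_torus[OF D u])
  then show ?thesis
    unfolding proj_eq_integral_merge
    by (rule AE_distrD[OF measurable_restrict_subset[OF u, of "\<lambda>_. unit_interval", folded torus_def]])
qed

lemma measurable_anova:
  assumes "f \<in> borel_measurable (torus D)"
  shows "finite u \<Longrightarrow> u \<subseteq> D \<Longrightarrow> anova D f u \<in> borel_measurable (torus D)"
proof (induction u rule: finite_psubset_induct)
  case (psubset u)
  have "(\<lambda>x. \<Sum>v\<in>Pow u - {u}. anova D f v x) \<in> borel_measurable (torus D)"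
  proof (rule borel_measurable_sum)
    fix v assume "v \<in> Pow u - {u}"
    then have "v \<subset> u" "v \<subseteq> D"
      using psubset.prems by auto
    then show "anova D f v \<in> borel_measurable (torus D)"
      using psubset.IH by blast
  qed
  then show ?case
    using psubset.hyps measurable_proj[OF psubset.prems assms] by (subst anova.simps) simp
qed

lemma measurable_truncation:
  assumes "finite D" "f \<in> borel_measurable (torus D)"
  shows "truncation D ds f \<in> borel_measurable (torus D)"
  unfolding truncation_def
  using assms by (intro borel_measurable_sum measurable_anova) (auto intro: finite_subset)

lemma anova_cong_proj:
  assumes "\<And>v. v \<subseteq> D \<Longrightarrow> proj D v f x = proj D v g x"
  shows "finite u \<Longrightarrow> u \<subseteq> D \<Longrightarrow> anova D f u x = anova D g u x"
proof (induction u rule: finite_psubset_induct)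
  case (psubset u)
  have "(\<Sum>v\<in>Pow u - {u}. anova D f v x) = (\<Sum>v\<in>Pow u - {u}. anova D g v x)"
    using psubset by (intro sum.cong refl psubset.IH) (auto intro: finite_subset)
  then show ?case
    using psubset assms by (subst (1 2) anova.simps) simp
qed

lemma AE_truncation_eq:
  assumes D: "finite D"
    and f: "f \<in> borel_measurable (torus D)" and g: "g \<in> borel_measurable (torus D)"
    and fg: "AE x in torus D. f x = g x"
  shows "AE x in torus D. truncation D ds f x = truncation D ds g x"
proof -
  have "AE x in torus D. \<forall>v\<in>Pow D. proj D v f x = proj D v g x"
    using D by (intro AE_finite_allI AE_proj_eq[OF D _ f g fg]) auto
  then show ?thesis
  proof eventually_elim
    case (elim x)
    then show ?case
      unfolding truncation_def using D
      by (intro sum.cong refl anova_cong_proj[of D f x g]) (auto intro: finite_subset)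
  qed
qed

lemma AE_remainder_eq_fourier_sum:
  assumes D: "finite D" and f: "integrable (torus D) f"
    and summable: "(\<lambda>k. norm (fourier_coeff D f k)) summable_on freqs D"
  shows "AE x in torus D. f x - truncation D ds f x
    = fourier_sum D (fourier_coeff D f) {k \<in> freqs D. ds < card (supp k)} x"
proof -
  let ?g = "fourier_sum D (fourier_coeff D f) (freqs D)"
  have f_g: "AE x in torus D. f x = ?g x"
    by (rule AE_eq_fourier_sum[OF D f summable])
  have "AE x in torus D. truncation D ds f x = truncation D ds ?g x"
    using borel_measurable_integrable[OF f] borel_measurable_integrable[OF integrable_fourier_sum[OF D summable]]
    by (rule AE_truncation_eq[OF D _ _ f_g])
  with f_g show ?thesis
    by eventually_elim (simp add: fourier_sum_minus_truncation[OF D summable])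
qed

lemma norm_fourier_sum_le_weighted:
  assumes K: "K \<subseteq> freqs D"
    and summable: "(\<lambda>k. w k * norm (c k)) summable_on freqs D"
    and w: "\<And>k. k \<in> freqs D \<Longrightarrow> 0 \<le> w k" and B: "0 \<le> B" "\<And>k. k \<in> K \<Longrightarrow> 1 \<le> B * w k"
  shows "norm (fourier_sum D c K x) \<le> B * (\<Sum>\<^sub>\<infinity>k\<in>freqs D. w k * norm (c k))"
proof -
  have summable_K: "(\<lambda>k. w k * norm (c k)) summable_on K"
    using summable K by (rule summable_on_subset_banach)
  have le: "norm (c k) \<le> B * (w k * norm (c k))" if "k \<in> K" for k
    using mult_right_mono[OF B(2)[OF that] norm_ge_zero[of "c k"]] by (simp add: mult.assoc)
  have summable_c: "(\<lambda>k. norm (c k)) summable_on K"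
    by (rule summable_on_comparison_test[OF summable_on_cmult_right[OF summable_K]]) (use le in auto)
  have "norm (fourier_sum D c K x) \<le> (\<Sum>\<^sub>\<infinity>k\<in>K. norm (c k * character D k x))"
    unfolding fourier_sum_def using summable_c
    by (intro norm_infsum_bound) (simp add: norm_mult)
  also have "\<dots> = (\<Sum>\<^sub>\<infinity>k\<in>K. norm (c k))"
    by (simp add: norm_mult)
  also have "\<dots> \<le> (\<Sum>\<^sub>\<infinity>k\<in>K. B * (w k * norm (c k)))"
    using summable_c summable_on_cmult_right[OF summable_K] le by (rule infsum_mono)
  also have "\<dots> = B * (\<Sum>\<^sub>\<infinity>k\<in>K. w k * norm (c k))"
    by (rule infsum_cmult_right) (rule summable_K)
  also have "\<dots> \<le> B * (\<Sum>\<^sub>\<infinity>k\<in>freqs D. w k * norm (c k))"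
    using summable_K summable K w by (intro mult_left_mono[OF _ B(1)] infsum_mono2) auto
  finally show ?thesis .
qed

section \<open>Lower bounds for the weight\<close>

lemma prod_one_plus_lower_bound_step:
  fixes a n N :: real
  assumes a: "1 \<le> a" and n: "0 \<le> n" "n \<le> N"
  shows "2 * (1 + n) * (1 + N + a) \<le> (1 + a) * (2 + n) * (1 + N)"
proof -
  text \<open>The difference of the two sides is \<open>(N - n) (a (2 + n) - n) + n (1 + n) (a - 1)\<close>.\<close>
  have "1 * (2 + n) \<le> a * (2 + n)"
    by (rule mult_right_mono[OF a]) (use n in simp)
  then have "n \<le> a * (2 + n)"
    by simp
  then have "0 \<le> (N - n) * (a * (2 + n) - n)"
    using n by simp
  moreover have "0 \<le> n * (1 + n) * (a - 1)"
    using a n by simp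
  ultimately show ?thesis
    by (simp add: algebra_simps)
qed

lemma prod_one_plus_lower_bound:
  fixes a :: "nat \<Rightarrow> real"
  assumes "finite u" "\<And>s. s \<in> u \<Longrightarrow> 1 \<le> a s"
  shows "2 ^ card u * (1 + (\<Sum>s\<in>u. a s)) \<le> (\<Prod>s\<in>u. 1 + a s) * (1 + real (card u))"
  using assms
proof (induction u rule: finite_induct)
  case empty
  then show ?case by simp
next
  case (insert t u)
  define P where "P = (\<Prod>s\<in>u. 1 + a s)"
  define N where "N = (\<Sum>s\<in>u. a s)"
  define n where "n = real (card u)"
  have IH: "2 ^ card u * (1 + N) \<le> P * (1 + n)"
    using insert unfolding P_def N_def n_def by simp
  have a: "1 \<le> a t"
    using insert.prems by simp
  have "n \<le> N"
    using sum_mono[of u "\<lambda>_. 1" a] insert.prems unfolding n_def N_def by simp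
  then have step: "2 * (1 + n) * (1 + N + a t) \<le> (1 + a t) * (2 + n) * (1 + N)"
    using a by (intro prod_one_plus_lower_bound_step) (auto simp: n_def)
  have "(1 + n) * (2 * 2 ^ card u * (1 + N + a t)) = 2 ^ card u * (2 * (1 + n) * (1 + N + a t))"
    by (simp add: algebra_simps)
  also have "\<dots> \<le> 2 ^ card u * ((1 + a t) * (2 + n) * (1 + N))"
    using step by (intro mult_left_mono) auto
  also have "\<dots> = ((1 + a t) * (2 + n)) * (2 ^ card u * (1 + N))"
    by (simp add: algebra_simps)
  also have "\<dots> \<le> ((1 + a t) * (2 + n)) * (P * (1 + n))"
    using IH a by (intro mult_left_mono) (auto simp: n_def)
  also have "\<dots> = (1 + n) * ((1 + a t) * P * (2 + n))"
    by (simp add: algebra_simps)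
  finally have "2 * 2 ^ card u * (1 + N + a t) \<le> (1 + a t) * P * (2 + n)"
    by (rule mult_left_le_imp_le) (simp add: n_def add_pos_nonneg)
  then show ?case
    using insert.hyps unfolding P_def N_def n_def by (simp add: algebra_simps)
qed

text \<open>The unnormalised weight of a frequency whose \<open>n\<close> nonzero entries are all \<open>\<plusminus>1\<close>;
  it is the least value over all frequencies with support of size \<open>n\<close>.\<close>

definition min_weight :: "real \<Rightarrow> real \<Rightarrow> nat \<Rightarrow> real" where
  "min_weight \<alpha> \<beta> n = 2 powr (\<beta> * real n) * (1 + real n) powr \<alpha>"

lemma min_weight_le:
  fixes a :: "nat \<Rightarrow> real"
  assumes u: "finite u" and a: "\<And>s. s \<in> u \<Longrightarrow> 1 \<le> a s"
    and \<beta>: "0 \<le> \<beta>" and \<alpha>\<beta>: "0 \<le> \<alpha> + \<beta>"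
  shows "min_weight \<alpha> \<beta> (card u) \<le> (1 + (\<Sum>s\<in>u. a s)) powr \<alpha> * (\<Prod>s\<in>u. (1 + a s) powr \<beta>)"
proof -
  define n where "n = real (card u)"
  define r where "r = (1 + (\<Sum>s\<in>u. a s)) / (1 + n)"
  have "n \<le> (\<Sum>s\<in>u. a s)"
    using sum_mono[of u "\<lambda>_. 1" a] a unfolding n_def by simp
  then have r: "1 \<le> r" and sum_eq: "1 + (\<Sum>s\<in>u. a s) = (1 + n) * r"
    by (auto simp: r_def n_def)
  have "2 ^ card u * r \<le> (\<Prod>s\<in>u. 1 + a s)"
    using prod_one_plus_lower_bound[OF u a] by (simp add: r_def n_def field_simps)
  then have "(2 ^ card u * r) powr \<beta> \<le> (\<Prod>s\<in>u. 1 + a s) powr \<beta>"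
    using r \<beta> by (intro powr_mono2) auto
  also have "\<dots> = (\<Prod>s\<in>u. (1 + a s) powr \<beta>)"
    by (rule prod_powr_distrib)
  finally have prod: "2 powr (\<beta> * n) * r powr \<beta> \<le> (\<Prod>s\<in>u. (1 + a s) powr \<beta>)"
    using r by (simp add: powr_mult n_def powr_realpow[symmetric] powr_powr mult.commute)
  have "1 \<le> r powr (\<alpha> + \<beta>)"
    using r \<alpha>\<beta> by (rule ge_one_powr_ge_zero)
  then have "min_weight \<alpha> \<beta> (card u) \<le> min_weight \<alpha> \<beta> (card u) * r powr (\<alpha> + \<beta>)"
    by (simp add: min_weight_def)
  also have "\<dots> = ((1 + n) * r) powr \<alpha> * (2 powr (\<beta> * n) * r powr \<beta>)"
    using r by (simp add: min_weight_def n_def powr_add powr_mult)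
  also have "\<dots> \<le> (1 + (\<Sum>s\<in>u. a s)) powr \<alpha> * (\<Prod>s\<in>u. (1 + a s) powr \<beta>)"
    unfolding sum_eq by (intro mult_left_mono prod) simp
  finally show ?thesis .
qed

lemma one_le_two_powr_mult_powr:
  fixes q :: real
  assumes "1 \<le> q" "q \<le> 2" "0 \<le> \<beta>" "0 \<le> \<alpha> + \<beta>"
  shows "1 \<le> 2 powr \<beta> * q powr \<alpha>"
proof (cases "0 \<le> \<alpha>")
  case True
  have "1 \<le> 2 powr \<beta>" "1 \<le> q powr \<alpha>"
    using assms True by (auto intro: ge_one_powr_ge_zero)
  then have "1 * 1 \<le> 2 powr \<beta> * q powr \<alpha>"
    by (intro mult_mono) auto
  then show ?thesis
    by simp
next
  case False
  then have "2 powr \<alpha> \<le> q powr \<alpha>"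
    using assms by (intro powr_mono2') auto
  then have "2 powr (\<beta> + \<alpha>) \<le> 2 powr \<beta> * q powr \<alpha>"
    by (simp add: powr_add)
  moreover have "1 \<le> 2 powr (\<beta> + \<alpha>)"
    using assms by (intro ge_one_powr_ge_zero) auto
  ultimately show ?thesis
    by linarith
qed

lemma min_weight_mono:
  assumes "0 \<le> \<beta>" "0 \<le> \<alpha> + \<beta>" "m \<le> n"
  shows "min_weight \<alpha> \<beta> m \<le> min_weight \<alpha> \<beta> n"
proof (rule lift_Suc_mono_le[OF _ assms(3), of "min_weight \<alpha> \<beta>"])
  fix n
  define q where "q = (2 + real n) / (1 + real n)"
  have "1 \<le> 2 powr \<beta> * q powr \<alpha>"
    using assms by (intro one_le_two_powr_mult_powr) (auto simp: q_def field_simps)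
  then have "min_weight \<alpha> \<beta> n * 1 \<le> min_weight \<alpha> \<beta> n * (2 powr \<beta> * q powr \<alpha>)"
    by (intro mult_left_mono) (simp_all add: min_weight_def)
  also have "\<dots> = min_weight \<alpha> \<beta> (Suc n)"
  proof -
    have "2 powr (\<beta> * real (Suc n)) = 2 powr (\<beta> * real n) * 2 powr \<beta>"
      by (simp add: powr_add[symmetric] algebra_simps)
    moreover have "(1 + real (Suc n)) powr \<alpha> = (1 + real n) powr \<alpha> * q powr \<alpha>"
      by (simp add: q_def powr_divide add.commute)
    ultimately show ?thesis
      by (simp add: min_weight_def mult_ac)
  qed
  finally show "min_weight \<alpha> \<beta> n \<le> min_weight \<alpha> \<beta> (Suc n)"
    by simp
qed

lemma rev_sort_eq_Max_Cons:
  fixes xs :: "'a::linorder list"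
  assumes "xs \<noteq> []"
  shows "rev (sort xs) = Max (set xs) # rev (sort (remove1 (Max (set xs)) xs))"
proof -
  have "sort xs = sort (remove1 (Max (set xs)) xs) @ [Max (set xs)]"
  proof (rule properties_for_sort)
    show "mset (sort (remove1 (Max (set xs)) xs) @ [Max (set xs)]) = mset xs"
      using assms by simp
    show "sorted (sort (remove1 (Max (set xs)) xs) @ [Max (set xs)])"
      using set_remove1_subset[of "Max (set xs)" xs] by (auto simp: sorted_append)
  qed
  then show ?thesis
    by simp
qed

lemma prod_mset_bounds_01:
  fixes A :: "'a::linordered_semidom multiset"
  assumes "\<forall>a\<in>#A. 0 \<le> a \<and> a \<le> 1"
  shows "0 \<le> prod_mset A" "prod_mset A \<le> 1"
  using assms by (induction A) (auto intro: mult_le_one)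

lemma submultiset_remove1_Max:
  fixes xs :: "'a::linorder list"
  assumes A: "A \<subseteq># mset xs" "A \<noteq> {#}"
  obtains y where "y \<in># A" "y \<le> Max (set xs)" "A - {#y#} \<subseteq># mset (remove1 (Max (set xs)) xs)"
proof (cases "Max (set xs) \<in># A")
  case True
  have "A - {#Max (set xs)#} \<subseteq># mset (remove1 (Max (set xs)) xs)"
    unfolding subseteq_mset_def using mset_subset_eq_count[OF A(1)] by (simp add: diff_le_mono)
  with True show ?thesis
    by (intro that) auto
next
  case False
  obtain y where "y \<in># A"
    using A(2) by blast
  moreover have "y \<le> Max (set xs)"
    using mset_subset_eqD[OF A(1) \<open>y \<in># A\<close>] by simp
  moreover have "A \<subseteq># mset (remove1 (Max (set xs)) xs)"
    unfolding subseteq_mset_def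
  proof
    fix a
    show "count A a \<le> count (mset (remove1 (Max (set xs)) xs)) a"
      using mset_subset_eq_count[OF A(1), of a] False by (cases "a = Max (set xs)") (simp_all add: not_in_iff)
  qed
  then have "A - {#y#} \<subseteq># mset (remove1 (Max (set xs)) xs)"
    by (rule subset_mset.order_trans[OF diff_subset_eq_self])
  ultimately show ?thesis
    by (rule that)
qed

lemma prod_mset_le_prod_largest:
  fixes xs :: "real list"
  assumes "A \<subseteq># mset xs" "\<forall>x\<in>set xs. 0 \<le> x \<and> x \<le> 1" "m \<le> size A"
  shows "prod_mset A \<le> prod_list (take m (rev (sort xs)))"
  using assms
proof (induction m arbitrary: xs A)
  case 0
  have "\<forall>a\<in>#A. 0 \<le> a \<and> a \<le> 1"
    using 0 by (auto dest: mset_subset_eqD)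
  then show ?case
    by (simp add: prod_mset_bounds_01)
next
  case (Suc m)
  define x where "x = Max (set xs)"
  have "A \<noteq> {#}"
    using Suc.prems(3) by auto
  then obtain y where y: "y \<in># A" "y \<le> x" "A - {#y#} \<subseteq># mset (remove1 x xs)"
    using submultiset_remove1_Max[OF Suc.prems(1)] unfolding x_def by blast
  have "xs \<noteq> []"
    using Suc.prems(1) \<open>A \<noteq> {#}\<close> by auto
  then have x: "x \<in> set xs" "rev (sort xs) = x # rev (sort (remove1 x xs))"
    unfolding x_def by (simp_all add: rev_sort_eq_Max_Cons)
  have rest_01: "\<forall>a\<in>#A - {#y#}. 0 \<le> a \<and> a \<le> 1"
    using Suc.prems(1,2) by (auto dest!: in_diffD mset_subset_eqD)
  have "m \<le> size (A - {#y#})"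
    using Suc.prems(3) y(1) by (simp add: size_Diff_singleton)
  moreover have "\<forall>z\<in>set (remove1 x xs). 0 \<le> z \<and> z \<le> 1"
    using Suc.prems(2) set_remove1_subset[of x xs] by blast
  ultimately have rest: "prod_mset (A - {#y#}) \<le> prod_list (take m (rev (sort (remove1 x xs))))"
    using y(3) by (intro Suc.IH)
  have "prod_mset A = y * prod_mset (A - {#y#})"
    using y(1) by (rule prod_mset.remove)
  also have "\<dots> \<le> x * prod_mset (A - {#y#})"
    using y(2) prod_mset_bounds_01(1)[OF rest_01] by (rule mult_right_mono)
  also have "\<dots> \<le> x * prod_list (take m (rev (sort (remove1 x xs))))"
    using rest x(1) Suc.prems(2) by (intro mult_left_mono) auto
  also have "\<dots> = prod_list (take (Suc m) (rev (sort xs)))"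
    using x(2) by simp
  finally show ?case .
qed

lemma prod_le_prod_gamma_star:
  assumes u: "u \<subseteq> {1..d}" and m: "m \<le> card u"
    and \<gamma>: "\<And>i. i \<in> {1..d} \<Longrightarrow> 0 < \<gamma> i \<and> \<gamma> i \<le> 1"
  shows "(\<Prod>s\<in>u. \<gamma> s) \<le> (\<Prod>s=1..m. gamma_star d \<gamma> s)"
proof -
  let ?xs = "map \<gamma> [1..<d+1]"
  have "finite u" "card u \<le> d"
    using u finite_subset card_mono[OF _ u] by auto
  have "(\<Prod>s\<in>u. \<gamma> s) = prod_mset (image_mset \<gamma> (mset_set u))"
    by (rule prod_unfold_prod_mset)
  also have "\<dots> \<le> prod_list (take m (rev (sort ?xs)))"
  proof (rule prod_mset_le_prod_largest)
    have "mset_set u \<subseteq># mset_set {1..<d+1}"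
      using u \<open>finite u\<close> by (simp add: atLeastLessThanSuc_atLeastAtMost)
    then show "image_mset \<gamma> (mset_set u) \<subseteq># mset ?xs"
      by (simp only: mset_map mset_upt image_mset_subseteq_mono)
    show "\<forall>x\<in>set ?xs. 0 \<le> x \<and> x \<le> 1"
      using \<gamma> by fastforce
  qed (use m in simp)
  also have "\<dots> = (\<Prod>s=1..m. gamma_star d \<gamma> s)"
  proof -
    have "prod_list (take m L) = (\<Prod>s=1..m. L ! (s - 1))" if "m \<le> length L" for L :: "real list"
      using that
    proof (induction m)
      case (Suc m)
      then show ?case
        by (simp add: take_Suc_conv_app_nth prod.cl_ivl_Suc)
    qed simp
    then show ?thesis
      unfolding gamma_star_def using m \<open>card u \<le> d\<close> by simp
  qed
  finally show ?thesis .
qed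

lemma gamma_star_in_image:
  assumes "1 \<le> s" "s \<le> d"
  shows "gamma_star d \<gamma> s \<in> \<gamma> ` {1..d}"
proof -
  let ?L = "rev (sort (map \<gamma> [1..<d+1]))"
  have "?L ! (s - 1) \<in> set ?L"
    using assms by (intro nth_mem) simp
  also have "set ?L = \<gamma> ` {1..<d+1}"
    by (simp only: set_rev set_sort set_map set_upt)
  also have "{1..<d+1} = {1..d}"
    by auto
  finally show ?thesis
    unfolding gamma_star_def .
qed

lemma pod_weight_bounds:
  assumes "0 < \<Gamma> (card u)" "\<Gamma> (card u) \<le> 1" "\<And>s. s \<in> u \<Longrightarrow> 0 < \<gamma> s \<and> \<gamma> s \<le> 1"
  shows "0 < pod_weight \<Gamma> \<gamma> u" "pod_weight \<Gamma> \<gamma> u \<le> 1"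
proof -
  have "0 < (\<Prod>s\<in>u. \<gamma> s)" "(\<Prod>s\<in>u. \<gamma> s) \<le> 1"
    using assms(3) by (auto intro: prod_pos prod_le_1 less_imp_le)
  then show "0 < pod_weight \<Gamma> \<gamma> u" "pod_weight \<Gamma> \<gamma> u \<le> 1"
    using assms(1,2) unfolding pod_weight_def by (auto intro: mult_le_one)
qed

lemma pod_weight_le_gamma_star:
  assumes u: "u \<subseteq> {1..d}" and m: "1 \<le> m" "m \<le> card u"
    and \<Gamma>_antimono: "\<And>i j. 1 \<le> i \<Longrightarrow> i \<le> j \<Longrightarrow> j \<le> d \<Longrightarrow> \<Gamma> j \<le> \<Gamma> i"
    and \<Gamma>_nonneg: "0 \<le> \<Gamma> (card u)"
    and \<gamma>: "\<And>i. i \<in> {1..d} \<Longrightarrow> 0 < \<gamma> i \<and> \<gamma> i \<le> 1"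
  shows "pod_weight \<Gamma> \<gamma> u \<le> \<Gamma> m * (\<Prod>s=1..m. gamma_star d \<gamma> s)"
proof -
  have "\<Gamma> (card u) \<le> \<Gamma> m"
    using m card_mono[OF _ u] by (intro \<Gamma>_antimono) auto
  moreover have "(\<Prod>s\<in>u. \<gamma> s) \<le> (\<Prod>s=1..m. gamma_star d \<gamma> s)"
    by (rule prod_le_prod_gamma_star[OF u m(2) \<gamma>])
  moreover have "0 \<le> (\<Prod>s\<in>u. \<gamma> s)"
  proof (rule prod_nonneg)
    fix s assume "s \<in> u"
    then show "0 \<le> \<gamma> s"
      using u \<gamma>[of s] by auto
  qed
  ultimately show ?thesis
    unfolding pod_weight_def using \<Gamma>_nonneg by (intro mult_mono) auto
qed

lemma norm1_eq_sum_supp: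
  assumes "k \<in> freqs D" "finite D"
  shows "norm1 D k = (\<Sum>i\<in>supp k. real_of_int \<bar>k i\<bar>)"
  unfolding norm1_def using assms supp_subset_if_freqs[OF assms(1)]
  by (intro sum.mono_neutral_right) (auto simp: supp_def)

lemma min_weight_div_le_wab:
  assumes k: "k \<in> freqs D" and D: "finite D" and \<beta>: "0 \<le> \<beta>" and \<alpha>\<beta>: "0 \<le> \<alpha> + \<beta>"
    and m: "m \<le> card (supp k)" and pw: "0 < pod_weight \<Gamma> \<gamma> (supp k)"
  shows "min_weight \<alpha> \<beta> m / pod_weight \<Gamma> \<gamma> (supp k) \<le> wab D \<alpha> \<beta> \<Gamma> \<gamma> k"
proof -
  have "finite (supp k)"
    using supp_subset_if_freqs[OF k] D by (rule finite_subset)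
  have "min_weight \<alpha> \<beta> m \<le> min_weight \<alpha> \<beta> (card (supp k))"
    by (rule min_weight_mono[OF \<beta> \<alpha>\<beta> m])
  also have "\<dots> \<le> (1 + norm1 D k) powr \<alpha> * (\<Prod>s\<in>supp k. (1 + real_of_int \<bar>k s\<bar>) powr \<beta>)"
    unfolding norm1_eq_sum_supp[OF k D]
    by (rule min_weight_le[OF \<open>finite (supp k)\<close> _ \<beta> \<alpha>\<beta>]) (simp add: supp_def)
  finally show ?thesis
    using pw by (simp add: wab_def divide_right_mono field_simps)
qed

lemma pod_weight_supp_bounds:
  assumes k: "k \<in> freqs {1..d}"
    and \<Gamma>: "\<And>i. i \<le> d \<Longrightarrow> 0 < \<Gamma> i \<and> \<Gamma> i \<le> 1"
    and \<gamma>: "\<And>i. i \<in> {1..d} \<Longrightarrow> 0 < \<gamma> i \<and> \<gamma> i \<le> 1"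
  shows "0 < pod_weight \<Gamma> \<gamma> (supp k)" "pod_weight \<Gamma> \<gamma> (supp k) \<le> 1"
proof -
  have "supp k \<subseteq> {1..d}"
    by (rule supp_subset_if_freqs[OF k])
  then have "card (supp k) \<le> d"
    using card_mono[of "{1..d}" "supp k"] by simp
  then show "0 < pod_weight \<Gamma> \<gamma> (supp k)" "pod_weight \<Gamma> \<gamma> (supp k) \<le> 1"
    using \<Gamma> \<gamma> \<open>supp k \<subseteq> {1..d}\<close> by (auto intro!: pod_weight_bounds)
qed

lemma one_le_wab:
  assumes k: "k \<in> freqs {1..d}" and \<beta>: "0 \<le> \<beta>" and \<alpha>\<beta>: "0 \<le> \<alpha> + \<beta>"
    and \<Gamma>: "\<And>i. i \<le> d \<Longrightarrow> 0 < \<Gamma> i \<and> \<Gamma> i \<le> 1"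
    and \<gamma>: "\<And>i. i \<in> {1..d} \<Longrightarrow> 0 < \<gamma> i \<and> \<gamma> i \<le> 1"
  shows "1 \<le> wab {1..d} \<alpha> \<beta> \<Gamma> \<gamma> k"
proof -
  note pw = pod_weight_supp_bounds[where \<Gamma>=\<Gamma> and \<gamma>=\<gamma>, OF k \<Gamma> \<gamma>]
  have "1 \<le> min_weight \<alpha> \<beta> 0 / pod_weight \<Gamma> \<gamma> (supp k)"
    using pw by (simp add: min_weight_def)
  also have "\<dots> \<le> wab {1..d} \<alpha> \<beta> \<Gamma> \<gamma> k"
    using pw(1) by (intro min_weight_div_le_wab[OF k _ \<beta> \<alpha>\<beta>]) auto
  finally show ?thesis .
qed

lemma one_le_truncation_bound_mult_wab:
  assumes k: "k \<in> freqs {1..d}" "ds < card (supp k)"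
    and \<beta>: "0 \<le> \<beta>" and \<alpha>\<beta>: "0 \<le> \<alpha> + \<beta>"
    and \<Gamma>: "\<And>i. i \<le> d \<Longrightarrow> 0 < \<Gamma> i \<and> \<Gamma> i \<le> 1"
    and \<Gamma>_antimono: "\<And>i j. 1 \<le> i \<Longrightarrow> i \<le> j \<Longrightarrow> j \<le> d \<Longrightarrow> \<Gamma> j \<le> \<Gamma> i"
    and \<gamma>: "\<And>i. i \<in> {1..d} \<Longrightarrow> 0 < \<gamma> i \<and> \<gamma> i \<le> 1"
  shows "1 \<le> \<Gamma> (ds + 1) * (2 + real ds) powr (- \<alpha>) * 2 powr (- \<beta> * real (ds + 1))
               * (\<Prod>s=1..ds+1. gamma_star d \<gamma> s) * wab {1..d} \<alpha> \<beta> \<Gamma> \<gamma> k"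
proof -
  let ?pw = "pod_weight \<Gamma> \<gamma> (supp k)"
  let ?X = "\<Gamma> (ds + 1) * (\<Prod>s=1..ds+1. gamma_star d \<gamma> s)"
  let ?mw = "min_weight \<alpha> \<beta> (ds + 1)"
  note pw = pod_weight_supp_bounds[where \<Gamma>=\<Gamma> and \<gamma>=\<gamma>, OF k(1) \<Gamma> \<gamma>]
  have "card (supp k) \<le> d"
    using card_mono[OF _ supp_subset_if_freqs[OF k(1)]] by simp
  then have "?pw \<le> ?X"
    using k \<Gamma> \<gamma> by (intro pod_weight_le_gamma_star[OF supp_subset_if_freqs[OF k(1)] _ _ \<Gamma>_antimono])
      (auto intro: less_imp_le)
  then have "1 \<le> ?X / ?pw"
    using pw by simp
  also have "\<dots> = ?X / ?mw * (?mw / ?pw)"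
    by (simp add: min_weight_def)
  also have "\<dots> \<le> ?X / ?mw * wab {1..d} \<alpha> \<beta> \<Gamma> \<gamma> k"
  proof (rule mult_left_mono)
    show "?mw / ?pw \<le> wab {1..d} \<alpha> \<beta> \<Gamma> \<gamma> k"
      using k(2) pw(1) by (intro min_weight_div_le_wab[OF k(1) _ \<beta> \<alpha>\<beta>]) auto
    show "0 \<le> ?X / ?mw"
      using pw(1) \<open>?pw \<le> ?X\<close> by (intro divide_nonneg_pos) (auto simp: min_weight_def)
  qed
  also have "?X / ?mw = \<Gamma> (ds + 1) * (2 + real ds) powr (- \<alpha>) * 2 powr (- \<beta> * real (ds + 1))
               * (\<Prod>s=1..ds+1. gamma_star d \<gamma> s)"
    by (simp add: min_weight_def powr_minus divide_inverse add_ac mult_ac)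
  finally show ?thesis .
qed

lemma truncation_bound_nonneg:
  assumes ds: "ds + 1 \<le> d"
    and \<Gamma>: "\<And>i. i \<le> d \<Longrightarrow> 0 < \<Gamma> i \<and> \<Gamma> i \<le> 1"
    and \<gamma>: "\<And>i. i \<in> {1..d} \<Longrightarrow> 0 < \<gamma> i \<and> \<gamma> i \<le> 1"
  shows "0 \<le> \<Gamma> (ds + 1) * (2 + real ds) powr (- \<alpha>) * 2 powr (- \<beta> * real (ds + 1))
    * (\<Prod>s=1..ds+1. gamma_star d \<gamma> s)"
proof -
  have "0 < gamma_star d \<gamma> s" if "s \<in> {1..ds+1}" for s
    using gamma_star_in_image[of s d \<gamma>] that ds \<gamma> by force
  then have "0 < (\<Prod>s=1..ds+1. gamma_star d \<gamma> s)"
    by (rule prod_pos)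
  then show ?thesis
    using \<Gamma>[OF ds] by (intro mult_nonneg_nonneg) auto
qed

lemma Linf_norm_le:
  assumes "g \<in> borel_measurable (torus D)" "AE x in torus D. norm (g x) \<le> C"
  shows "Linf_norm D g \<le> ereal C"
  unfolding Linf_norm_def using assms by (intro esssup_I) auto

lemma Linf_norm_remainder_le:
  assumes D: "finite D" and f: "in_wiener D w f"
    and w: "\<And>k. k \<in> freqs D \<Longrightarrow> 1 \<le> w k"
    and B: "0 \<le> B" "\<And>k. k \<in> freqs D \<Longrightarrow> ds < card (supp k) \<Longrightarrow> 1 \<le> B * w k"
  shows "Linf_norm D (\<lambda>x. f x - truncation D ds f x) \<le> ereal (B * wiener_norm D w f)"
proof -
  let ?c = "fourier_coeff D f"
  have integrable: "integrable (torus D) f" and summable: "(\<lambda>k. w k * norm (?c k)) summable_on freqs D"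
    using f unfolding in_wiener_def by auto
  have "norm (?c k) \<le> w k * norm (?c k)" if "k \<in> freqs D" for k
    using mult_right_mono[OF w[OF that] norm_ge_zero] by simp
  then have "(\<lambda>k. norm (?c k)) summable_on freqs D"
    by (rule summable_on_comparison_test[OF summable]) auto
  then have "AE x in torus D. f x - truncation D ds f x = fourier_sum D ?c {k \<in> freqs D. ds < card (supp k)} x"
    by (rule AE_remainder_eq_fourier_sum[OF D integrable])
  moreover have "norm (fourier_sum D ?c {k \<in> freqs D. ds < card (supp k)} x) \<le> B * wiener_norm D w f" for x
    unfolding wiener_norm_def using w B
    by (intro norm_fourier_sum_le_weighted[OF _ summable]) (auto intro: order.trans[OF zero_le_one])
  ultimately have "AE x in torus D. norm (f x - truncation D ds f x) \<le> B * wiener_norm D w f"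
    by (auto elim: eventually_mono)
  moreover have "(\<lambda>x. f x - truncation D ds f x) \<in> borel_measurable (torus D)"
    using borel_measurable_integrable[OF integrable] measurable_truncation[OF D] by measurable
  ultimately show ?thesis
    by (rule Linf_norm_le[rotated])
qed

theorem corollary4p8:
  fixes d ds :: nat and \<alpha> \<beta> :: real and \<Gamma> \<gamma> :: "nat \<Rightarrow> real"
    and f :: "(nat \<Rightarrow> real) \<Rightarrow> complex"
  assumes "d \<ge> 2"
    and "1 \<le> ds" and "ds \<le> d - 1"
    and "\<beta> \<ge> 0" and "\<alpha> > - \<beta>"
    and "0 < \<Gamma> 0" and "\<Gamma> 0 \<le> 1"
    and "\<And>i. i \<in> {1..d} \<Longrightarrow> 0 < \<Gamma> i \<and> \<Gamma> i \<le> 1"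
    and "\<And>i j. 1 \<le> i \<Longrightarrow> i \<le> j \<Longrightarrow> j \<le> d \<Longrightarrow> \<Gamma> j \<le> \<Gamma> i"
    and "\<And>i. i \<in> {1..d} \<Longrightarrow> 0 < \<gamma> i \<and> \<gamma> i \<le> 1"
    and "in_wiener {1..d} (wab {1..d} \<alpha> \<beta> \<Gamma> \<gamma>) f"
  shows "Linf_norm {1..d} (\<lambda>x. f x - truncation {1..d} ds f x)
      \<le> ereal (\<Gamma> (ds + 1) * (2 + real ds) powr (- \<alpha>) * 2 powr (- \<beta> * real (ds + 1))
               * (\<Prod>s=1..ds+1. gamma_star d \<gamma> s)
               * wiener_norm {1..d} (wab {1..d} \<alpha> \<beta> \<Gamma> \<gamma>) f)"
proof -
  have "ds + 1 \<le> d" and \<alpha>\<beta>: "0 \<le> \<alpha> + \<beta>"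
    using assms(1,3,5) by simp_all
  have \<Gamma>: "0 < \<Gamma> i \<and> \<Gamma> i \<le> 1" if "i \<le> d" for i
    using that assms(6-8) by (cases "i = 0") auto
  show ?thesis
  proof (rule Linf_norm_remainder_le[OF _ assms(11)])
    show "1 \<le> wab {1..d} \<alpha> \<beta> \<Gamma> \<gamma> k" if "k \<in> freqs {1..d}" for k
      by (rule one_le_wab[where \<Gamma>=\<Gamma> and \<gamma>=\<gamma>, OF that assms(4) \<alpha>\<beta> \<Gamma> assms(10)])
    show "1 \<le> \<Gamma> (ds + 1) * (2 + real ds) powr (- \<alpha>) * 2 powr (- \<beta> * real (ds + 1))
        * (\<Prod>s=1..ds+1. gamma_star d \<gamma> s) * wab {1..d} \<alpha> \<beta> \<Gamma> \<gamma> k"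
      if "k \<in> freqs {1..d}" "ds < card (supp k)" for k
      by (rule one_le_truncation_bound_mult_wab[where \<Gamma>=\<Gamma> and \<gamma>=\<gamma>, OF that assms(4) \<alpha>\<beta> \<Gamma> assms(9,10)])
    show "0 \<le> \<Gamma> (ds + 1) * (2 + real ds) powr (- \<alpha>) * 2 powr (- \<beta> * real (ds + 1))
        * (\<Prod>s=1..ds+1. gamma_star d \<gamma> s)"
      by (rule truncation_bound_nonneg[OF \<open>ds + 1 \<le> d\<close> \<Gamma> assms(10)])
  qed simp
qed

end
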